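(* The set $\{G\in\mathcal G:\ \overline G\text{ is simple, not finitely generated and not locally finite}\}$ is comeager in $\mathcal G$.
   Context: Let $\mathbb N=\{1,2,3,\dots\}$. Equip $\mathbb N^{\mathbb N\times\mathbb N}$ with the product topology of the discrete topology on $\mathbb N$. Let $\mathcal G$ be the subspace consisting of those $A\in\mathbb N^{\mathbb N\times\mathbb N}$ that are the multiplication table of a group on the underlying set $\mathbb N$ whose identity element is $1$. For $G\in\mathcal G$, $\overline G$ denotes the group on $\mathbb N$ with multiplication table $G$. *)

theory Defs
  imports "HOL-Analysis.Analysis" "HOL-Algebra.Coset" "HOL-Algebra.Generated_Groups"
begin

definition Npos :: "nat set" where "Npos = {n. 1 \<le> n}"

text \<open>N^(N x N) with the product of discrete topologies on N. Points are the
  (extensional) functions Npos x Npos -> Npos.\<close>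
definition table_space :: "(nat \<times> nat \<Rightarrow> nat) topology" where
  "table_space = product_topology (\<lambda>_. discrete_topology Npos) (Npos \<times> Npos)"

definition tbl_grp :: "(nat \<times> nat \<Rightarrow> nat) \<Rightarrow> nat monoid" where
  "tbl_grp A = \<lparr>carrier = Npos, mult = (\<lambda>x y. A (x, y)), one = 1\<rparr>"

definition group_tables :: "(nat \<times> nat \<Rightarrow> nat) set" where
  "group_tables = {A \<in> topspace table_space. group (tbl_grp A)}"

definition G_space :: "(nat \<times> nat \<Rightarrow> nat) topology" where
  "G_space = subtopology table_space group_tables"

definition nowhere_dense_in :: "'a topology \<Rightarrow> 'a set \<Rightarrow> bool" where
  "nowhere_dense_in Y S \<longleftrightarrow> S \<subseteq> topspace Y \<and> Y interior_of (Y closure_of S) = {}"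

definition meager_in :: "'a topology \<Rightarrow> 'a set \<Rightarrow> bool" where
  "meager_in Y S \<longleftrightarrow> (\<exists>\<F>. countable \<F> \<and> (\<forall>T\<in>\<F>. nowhere_dense_in Y T) \<and> S \<subseteq> \<Union>\<F>)"

definition comeager_in :: "'a topology \<Rightarrow> 'a set \<Rightarrow> bool" where
  "comeager_in Y S \<longleftrightarrow> S \<subseteq> topspace Y \<and> meager_in Y (topspace Y - S)"

text \<open>Group-theoretic notions (for possibly infinite groups; note the library's
  simple_group locale uses card and so only applies to finite groups).\<close>
definition simple_grp :: "('a, 'b) monoid_scheme \<Rightarrow> bool" where
  "simple_grp G \<longleftrightarrow> carrier G \<noteq> {\<one>\<^bsub>G\<^esub>} \<and>
     (\<forall>H. H \<lhd> G \<longrightarrow> H = {\<one>\<^bsub>G\<^esub>} \<or> H = carrier G)"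

definition finitely_generated_grp :: "('a, 'b) monoid_scheme \<Rightarrow> bool" where
  "finitely_generated_grp G \<longleftrightarrow>
     (\<exists>S. finite S \<and> S \<subseteq> carrier G \<and> generate G S = carrier G)"

definition locally_finite_grp :: "('a, 'b) monoid_scheme \<Rightarrow> bool" where
  "locally_finite_grp G \<longleftrightarrow>
     (\<forall>S. finite S \<and> S \<subseteq> carrier G \<longrightarrow> finite (generate G S))"

end

theory Submission
  imports Defs "HOL-Algebra.Multiplicative_Group" "HOL-Algebra.Bij" "HOL-Number_Theory.Number_Theory"
begin

text \<open>A basic open set of tables prescribes finitely many products. For a finite \<open>S\<close>, the tables
  whose group is generated by \<open>S\<close>, the locally finite ones, and, for \<open>a \<noteq> 1\<close> and \<open>b\<close>, those with a
  normal subgroup containing \<open>a\<close> but not \<open>b\<close> form countably many sets covering the complement of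
  the set in question; each of them is nowhere dense. To see this, embed the group \<open>H\<close> of a
  table into a countable group \<open>Q\<close> of permutations of \<open>H \<times> K\<close>, with \<open>K\<close> a group of complex affine
  maps, that contains bijections conjugating chosen pairs of elements. In \<open>Q\<close> finitely many
  products certify that the property fails: an element commuting with \<open>H\<close> but not with some
  other element; elements with \<open>x y x\<^sup>-\<^sup>1 = y\<^sup>2\<close>, \<open>y\<close> conjugate to \<open>x\<close> and \<open>y \<noteq> 1\<close>, which forces
  \<open>y\<close> to have infinite order; or \<open>b\<close> as an iterated commutator built from a conjugate of \<open>a\<close>.
  Relabelling \<open>Q\<close> by the positive integers without moving the finitely many prescribed entries
  gives a nearby table, and prescribing the certifying products as well gives a basic open set
  that misses the family.\<close>

section \<open>Cylinders in the space of tables\<close>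

lemma topspace_table_space: "topspace table_space = (\<Pi>\<^sub>E p\<in>Npos \<times> Npos. Npos)"
  by (simp add: table_space_def)

lemma group_tables_subset_topspace: "group_tables \<subseteq> topspace table_space"
  by (auto simp: group_tables_def)

lemma topspace_G_space: "topspace G_space = group_tables"
  using group_tables_subset_topspace by (auto simp: G_space_def)

definition table_cylinder :: "(nat \<times> nat \<Rightarrow> nat) \<Rightarrow> (nat \<times> nat) set \<Rightarrow> (nat \<times> nat \<Rightarrow> nat) set"
  where "table_cylinder B E = {C \<in> topspace table_space. \<forall>p\<in>E. C p = B p}"

lemma openin_table_cylinder:
  assumes B: "B \<in> topspace table_space" and E: "finite E"
  shows "openin table_space (table_cylinder B E)"
proof -
  let ?E = "E \<inter> (Npos \<times> Npos)"
  have proj: "openin table_space {C \<in> topspace table_space. C p \<in> {B p}}" if "p \<in> ?E" for p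
  proof (rule openin_continuous_map_preimage)
    show "continuous_map table_space (discrete_topology Npos) (\<lambda>C. C p)"
      unfolding table_space_def using that by (intro continuous_map_product_projection) auto
    show "openin (discrete_topology Npos) {B p}"
      using B that by (auto simp: topspace_table_space PiE_iff)
  qed
  \<comment> \<open>Outside \<open>Npos \<times> Npos\<close> all points of the space take the value \<open>undefined\<close>.\<close>
  have "table_cylinder B E = (\<Inter>p\<in>?E. {C \<in> topspace table_space. C p \<in> {B p}}) \<inter> topspace table_space"
  proof (intro equalityI subsetI)
    fix C assume "C \<in> table_cylinder B E"
    then show "C \<in> (\<Inter>p\<in>?E. {C \<in> topspace table_space. C p \<in> {B p}}) \<inter> topspace table_space"
      by (simp add: table_cylinder_def)
  next
    fix C assume C: "C \<in> (\<Inter>p\<in>?E. {C \<in> topspace table_space. C p \<in> {B p}}) \<inter> topspace table_space"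
    have "C p = B p" if "p \<in> E" for p
    proof (cases "p \<in> Npos \<times> Npos")
      case True
      then show ?thesis using C that by blast
    next
      case False
      have "C \<in> (\<Pi>\<^sub>E p\<in>Npos \<times> Npos. Npos)" using C by (simp add: topspace_table_space)
      then have "C p = undefined" using False by (rule PiE_arb)
      moreover have "B p = undefined" using B False unfolding topspace_table_space by (rule PiE_arb)
      ultimately show ?thesis by simp
    qed
    with C show "C \<in> table_cylinder B E" by (simp add: table_cylinder_def)
  qed
  moreover have "openin table_space ((\<Inter>p\<in>?E. {C \<in> topspace table_space. C p \<in> {B p}}) \<inter> topspace table_space)"
    by (rule openin_INT) (use E proj in auto)
  ultimately show ?thesis by simp
qed

lemma openin_table_space_contains_cylinder:
  assumes "openin table_space W" "A \<in> W"
  obtains D where "finite D" "table_cylinder A D \<subseteq> W"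
proof -
  obtain X where X: "A \<in> (\<Pi>\<^sub>E i\<in>Npos \<times> Npos. X i)"
    "finite {i. X i \<noteq> topspace (discrete_topology Npos)}" "(\<Pi>\<^sub>E i\<in>Npos \<times> Npos. X i) \<subseteq> W"
    using product_topology_open_contains_basis[OF assms[unfolded table_space_def]] by blast
  have "table_cylinder A {i. X i \<noteq> Npos} \<subseteq> (\<Pi>\<^sub>E i\<in>Npos \<times> Npos. X i)"
  proof
    fix C assume "C \<in> table_cylinder A {i. X i \<noteq> Npos}"
    then have C: "C \<in> (\<Pi>\<^sub>E p\<in>Npos \<times> Npos. Npos)" "\<And>i. X i \<noteq> Npos \<Longrightarrow> C i = A i"
      by (auto simp: table_cylinder_def topspace_table_space)
    have "C i \<in> X i" if "i \<in> Npos \<times> Npos" for i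
      using C PiE_mem[OF X(1) that] PiE_mem[OF C(1) that] by (cases "X i = Npos") auto
    with C(1) show "C \<in> (\<Pi>\<^sub>E i\<in>Npos \<times> Npos. X i)" by (simp add: PiE_iff)
  qed
  with X(2,3) that show ?thesis by auto
qed

definition avoidable_near :: "(nat \<times> nat \<Rightarrow> nat) set \<Rightarrow> (nat \<times> nat \<Rightarrow> nat) \<Rightarrow> (nat \<times> nat) set \<Rightarrow> bool"
  where "avoidable_near T A D \<longleftrightarrow> (\<exists>B D'. B \<in> group_tables \<and> (\<forall>p\<in>D. B p = A p) \<and> finite D' \<and>
           (\<forall>C\<in>group_tables. (\<forall>p\<in>D'. C p = B p) \<longrightarrow> C \<notin> T))"

lemma nowhere_dense_in_G_spaceI:
  assumes TG: "T \<subseteq> group_tables"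
    and shrink: "\<And>A D. A \<in> group_tables \<Longrightarrow> finite D \<Longrightarrow> avoidable_near T A D"
  shows "nowhere_dense_in G_space T"
  unfolding nowhere_dense_in_def
proof (intro conjI)
  show "T \<subseteq> topspace G_space" using TG topspace_G_space by simp
  show "G_space interior_of (G_space closure_of T) = {}"
  proof (rule ccontr)
    define W where "W = G_space interior_of (G_space closure_of T)"
    assume "G_space interior_of (G_space closure_of T) \<noteq> {}"
    then obtain A where AW: "A \<in> W" unfolding W_def by blast
    have "openin G_space W" by (simp add: W_def)
    then obtain W' where W': "openin table_space W'" "W = W' \<inter> group_tables"
      unfolding G_space_def openin_subtopology by blast
    then obtain D where D: "finite D" "table_cylinder A D \<subseteq> W'"
      using AW openin_table_space_contains_cylinder by blast
    have AG: "A \<in> group_tables" using AW W'(2) by blast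
    obtain B D' where B: "B \<in> group_tables" "\<forall>p\<in>D. B p = A p" "finite D'"
      "\<forall>C\<in>group_tables. (\<forall>p\<in>D'. C p = B p) \<longrightarrow> C \<notin> T"
      using shrink[OF AG D(1)] unfolding avoidable_near_def by blast
    define V where "V = table_cylinder B (D \<union> D') \<inter> group_tables"
    have "openin table_space (table_cylinder B (D \<union> D'))"
      using openin_table_cylinder group_tables_subset_topspace B(1,3) D(1) by blast
    then have V: "openin G_space V"
      unfolding V_def G_space_def openin_subtopology by blast
    have BV: "B \<in> V"
      using B(1) group_tables_subset_topspace by (auto simp: V_def table_cylinder_def)
    have "V \<subseteq> W"
      using B(2) D(2) W'(2) by (auto simp: V_def table_cylinder_def)
    moreover have "W \<subseteq> G_space closure_of T" unfolding W_def by (rule interior_of_subset)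
    ultimately have "B \<in> G_space closure_of T" using BV by blast
    then obtain C where "C \<in> T" "C \<in> V"
      using V BV unfolding in_closure_of by blast
    then show False using B(4) by (auto simp: V_def table_cylinder_def)
  qed
qed


section \<open>Realising countable groups as tables\<close>

lemma infinite_Npos: "infinite Npos"
proof -
  have "Npos = {1..}" by (auto simp: Npos_def)
  then show ?thesis using infinite_Ici[of "1::nat"] by simp
qed

lemma one_in_Npos [simp]: "(1::nat) \<in> Npos" "Suc 0 \<in> Npos"
  by (simp_all add: Npos_def)

lemma tbl_grp_simps [simp]:
  "carrier (tbl_grp A) = Npos" "x \<otimes>\<^bsub>tbl_grp A\<^esub> y = A (x, y)" "\<one>\<^bsub>tbl_grp A\<^esub> = 1"
  by (simp_all add: tbl_grp_def)

lemma group_tbl_grp: "A \<in> group_tables \<Longrightarrow> group (tbl_grp A)"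
  by (simp add: group_tables_def)

lemma countably_infinite_bij_betw:
  assumes "countable X" "infinite X" "countable Y" "infinite Y"
  obtains h where "bij_betw h X Y"
proof -
  obtain e1 :: "_ \<Rightarrow> nat" where "bij_betw e1 X UNIV" using countableE_infinite assms(1,2) by blast
  moreover obtain e2 :: "_ \<Rightarrow> nat" where "bij_betw e2 Y UNIV" using countableE_infinite assms(3,4) by blast
  ultimately have "bij_betw (the_inv_into Y e2 \<circ> e1) X Y"
    by (meson bij_betw_the_inv_into bij_betw_trans)
  then show ?thesis by (rule that)
qed

lemma bij_betw_extending_inverse:
  assumes X: "countable X" "infinite X" and Y: "countable Y" "infinite Y"
    and F: "finite F" "F \<subseteq> Y" and j: "inj_on j F" "j ` F \<subseteq> X"
  obtains l where "bij_betw l X Y" "\<And>n. n \<in> F \<Longrightarrow> l (j n) = n"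
proof -
  obtain h where h: "bij_betw h (X - j ` F) (Y - F)"
    using countably_infinite_bij_betw[of "X - j ` F" "Y - F"] X Y F(1) by auto
  define l where "l q = (if q \<in> j ` F then the_inv_into F j q else h q)" for q
  have "bij_betw l (j ` F) F"
    using bij_betw_the_inv_into[OF inj_on_imp_bij_betw[OF j(1)]]
    by (rule bij_betw_cong[THEN iffD1, rotated]) (simp add: l_def)
  moreover have "bij_betw l (X - j ` F) (Y - F)"
    using h by (rule bij_betw_cong[THEN iffD1, rotated]) (simp add: l_def)
  ultimately have "bij_betw l (j ` F \<union> (X - j ` F)) (F \<union> (Y - F))"
    by (rule bij_betw_combine) blast
  moreover have "j ` F \<union> (X - j ` F) = X" "F \<union> (Y - F) = Y" using F(2) j(2) by auto
  ultimately show ?thesis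
    using that by (simp add: l_def the_inv_into_f_f[OF j(1)])
qed

lemma group_table_transport:
  assumes Q: "group Q" and l: "bij_betw l (carrier Q) Npos" "l \<one>\<^bsub>Q\<^esub> = 1"
  obtains B where "B \<in> group_tables"
    "\<And>q1 q2. q1 \<in> carrier Q \<Longrightarrow> q2 \<in> carrier Q \<Longrightarrow> B (l q1, l q2) = l (q1 \<otimes>\<^bsub>Q\<^esub> q2)"
proof -
  interpret Q: group Q by (rule Q)
  define e where "e = inv_into (carrier Q) l"
  have e: "e n \<in> carrier Q" if "n \<in> Npos" for n
    using bij_betw_inv_into[OF l(1)] that unfolding e_def bij_betw_def by blast
  have el: "e (l q) = q" if "q \<in> carrier Q" for q
    using bij_betw_inv_into_left[OF l(1) that] by (simp add: e_def)
  have lQ: "l q \<in> Npos" if "q \<in> carrier Q" for q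
    using l(1) that unfolding bij_betw_def by blast
  define B where "B = restrict (\<lambda>(m, n). l (e m \<otimes>\<^bsub>Q\<^esub> e n)) (Npos \<times> Npos)"
  have B: "B (l q1, l q2) = l (q1 \<otimes>\<^bsub>Q\<^esub> q2)" if "q1 \<in> carrier Q" "q2 \<in> carrier Q" for q1 q2
    using that by (simp add: B_def lQ el)
  have "B \<in> topspace table_space"
    by (auto simp: topspace_table_space B_def e lQ)
  moreover have "group (tbl_grp B)"
  proof -
    have "l \<in> hom Q (tbl_grp B)" by (rule homI) (simp_all add: lQ B)
    then have "group ((tbl_grp B)\<lparr>carrier := l ` carrier Q, one := l \<one>\<^bsub>Q\<^esub>\<rparr>)"
      by (rule Q.hom_imp_img_group)
    moreover have "l ` carrier Q = Npos" using l(1) by (simp add: bij_betw_def)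
    ultimately show ?thesis using l(2) by (simp add: tbl_grp_def)
  qed
  ultimately show ?thesis using that B by (simp add: group_tables_def)
qed

lemma group_table_extension:
  fixes Q :: "('q, 'z) monoid_scheme"
  assumes AG: "A \<in> group_tables" and D: "finite D" and Q: "group Q" "countable (carrier Q)"
    and j: "j \<in> hom (tbl_grp A) Q" "inj_on j Npos" and S0: "finite S0" "S0 \<subseteq> Npos"
  obtains B l where "B \<in> group_tables" "\<forall>p\<in>D. B p = A p" "bij_betw l (carrier Q) Npos"
    "\<And>n. n \<in> S0 \<Longrightarrow> l (j n) = n" "l \<one>\<^bsub>Q\<^esub> = 1"
    "\<And>q1 q2. q1 \<in> carrier Q \<Longrightarrow> q2 \<in> carrier Q \<Longrightarrow> B (l q1, l q2) = l (q1 \<otimes>\<^bsub>Q\<^esub> q2)"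
proof -
  interpret jh: group_hom "tbl_grp A" Q j
    using group_tbl_grp[OF AG] Q j by (simp add: group_hom_def group_hom_axioms_def)
  have AT: "A \<in> (\<Pi>\<^sub>E p\<in>Npos \<times> Npos. Npos)"
    using AG group_tables_subset_topspace topspace_table_space by auto
  have jN: "j ` Npos \<subseteq> carrier Q" using j(1) by (auto simp: hom_def)
  define D0 where "D0 = D \<inter> (Npos \<times> Npos)"
  define F where "F = insert 1 (S0 \<union> fst ` D0 \<union> snd ` D0 \<union> A ` D0)"
  have F: "finite F" "F \<subseteq> Npos"
    using D S0 AT by (auto simp: F_def D0_def PiE_iff)
  have inf: "infinite (carrier Q)"
    using finite_subset[OF jN] finite_imageD[OF _ j(2)] infinite_Npos by blast
  obtain l where l: "bij_betw l (carrier Q) Npos" and lj: "\<And>n. n \<in> F \<Longrightarrow> l (j n) = n"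
  proof (rule bij_betw_extending_inverse[of "carrier Q" Npos F j])
    show "inj_on j F" using inj_on_subset[OF j(2) F(2)] .
    show "j ` F \<subseteq> carrier Q" using F(2) jN by blast
  qed (use Q(2) inf infinite_Npos F in auto)
  have l1: "l \<one>\<^bsub>Q\<^esub> = 1" using lj[of 1] jh.hom_one by (simp add: F_def)
  obtain B where B: "B \<in> group_tables"
    and Bl: "\<And>q1 q2. q1 \<in> carrier Q \<Longrightarrow> q2 \<in> carrier Q \<Longrightarrow> B (l q1, l q2) = l (q1 \<otimes>\<^bsub>Q\<^esub> q2)"
    using group_table_transport[OF Q(1) l l1] by blast
  have "B p = A p" if p: "p \<in> D" for p
  proof (cases "p \<in> Npos \<times> Npos")
    case True
    then obtain n m where nm: "p = (n, m)" "n \<in> Npos" "m \<in> Npos" by blast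
    with p have "n \<in> F" "m \<in> F" "A (n, m) \<in> F" by (force simp: F_def D0_def)+
    then have "B (n, m) = l (j n \<otimes>\<^bsub>Q\<^esub> j m)" "l (j (A (n, m))) = A (n, m)"
      using Bl[of "j n" "j m"] lj jN nm by auto
    moreover have "j n \<otimes>\<^bsub>Q\<^esub> j m = j (A (n, m))" using jh.hom_mult nm by simp
    ultimately show ?thesis using nm(1) by simp
  next
    case False
    have "B \<in> (\<Pi>\<^sub>E p\<in>Npos \<times> Npos. Npos)"
      using B group_tables_subset_topspace topspace_table_space by auto
    then show ?thesis using PiE_arb[OF AT False] PiE_arb[OF _ False] by simp
  qed
  then show ?thesis using that B l lj l1 Bl by (simp add: F_def)
qed

context group
begin

lemma foldr_mult_append:
  assumes "set xs \<subseteq> carrier G" "set ys \<subseteq> carrier G"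
  shows "foldr (\<otimes>) (xs @ ys) \<one> = foldr (\<otimes>) xs \<one> \<otimes> foldr (\<otimes>) ys \<one>"
proof -
  have closed: "foldr (\<otimes>) zs \<one> \<in> carrier G" if "set zs \<subseteq> carrier G" for zs
    using that by (induction zs) auto
  show ?thesis using assms by (induction xs) (auto simp: closed m_assoc)
qed

lemma countable_generate:
  assumes "countable X" "X \<subseteq> carrier G"
  shows "countable (generate G X)"
proof -
  define Y where "Y = X \<union> m_inv G ` X"
  have Y: "Y \<subseteq> carrier G" using assms(2) by (auto simp: Y_def)
  have "generate G X \<subseteq> (\<lambda>xs. foldr (\<otimes>) xs \<one>) ` lists Y"
  proof
    fix x assume "x \<in> generate G X"
    then show "x \<in> (\<lambda>xs. foldr (\<otimes>) xs \<one>) ` lists Y"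
    proof induction
      case one
      show ?case by (rule image_eqI[where x="[]"]) auto
    next
      case (incl h)
      then show ?case using assms(2) by (intro image_eqI[where x="[h]"]) (auto simp: Y_def)
    next
      case (inv h)
      then show ?case using assms(2) by (intro image_eqI[where x="[inv h]"]) (auto simp: Y_def)
    next
      case (eng h1 h2)
      then obtain xs ys where xs: "xs \<in> lists Y" "h1 = foldr (\<otimes>) xs \<one>"
        and ys: "ys \<in> lists Y" "h2 = foldr (\<otimes>) ys \<one>" by blast
      have "set xs \<subseteq> carrier G" "set ys \<subseteq> carrier G" using xs ys Y by auto
      then have "h1 \<otimes> h2 = foldr (\<otimes>) (xs @ ys) \<one>" unfolding xs ys by (simp only: foldr_mult_append)
      then show ?case using xs ys by (intro image_eqI[where x="xs @ ys"]) auto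
    qed
  qed
  moreover have "countable Y" using assms(1) by (simp add: Y_def)
  ultimately show ?thesis by (meson countable_image countable_lists countable_subset)
qed

lemma ord_eqI:
  assumes "x \<in> carrier G" "\<And>i::int. x [^] i = \<one> \<longleftrightarrow> int d dvd i"
  shows "ord x = d"
proof -
  have "int (ord x) dvd i \<longleftrightarrow> int d dvd i" for i
    using assms int_pow_eq_id[OF assms(1)] by simp
  then show ?thesis by (metis dvd_antisym dvd_refl int_dvd_int_iff)
qed

lemma conj_nat_pow:
  assumes g: "g \<in> carrier G" and w: "w \<in> carrier G"
  shows "(g \<otimes> w \<otimes> inv g) [^] (k::nat) = g \<otimes> w [^] k \<otimes> inv g"
proof (induction k)
  case 0 then show ?case using g by simp
next
  case (Suc k)
  have "(g \<otimes> w \<otimes> inv g) [^] Suc k = (g \<otimes> w [^] k \<otimes> inv g) \<otimes> (g \<otimes> w \<otimes> inv g)"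
    using Suc by simp
  also have "\<dots> = g \<otimes> (w [^] k \<otimes> w) \<otimes> inv g"
    using g w by (simp add: m_assoc[symmetric]) (simp add: m_assoc)
  finally show ?case by simp
qed

lemma subgroup_centralizer:
  assumes a: "a \<in> carrier G"
  shows "subgroup {g \<in> carrier G. a \<otimes> g = g \<otimes> a} G"
proof (rule subgroupI)
  fix g assume "g \<in> {g \<in> carrier G. a \<otimes> g = g \<otimes> a}"
  then have g: "g \<in> carrier G" "a \<otimes> g = g \<otimes> a" by auto
  have "inv g \<otimes> a = inv g \<otimes> a \<otimes> (g \<otimes> inv g)" using g a by simp
  also have "\<dots> = inv g \<otimes> (a \<otimes> g) \<otimes> inv g" using g(1) a by (simp add: m_assoc)
  also have "\<dots> = inv g \<otimes> (g \<otimes> a) \<otimes> inv g" using g by simp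
  also have "\<dots> = a \<otimes> inv g" using g a by (metis inv_closed l_inv l_one m_assoc)
  finally show "inv g \<in> {g \<in> carrier G. a \<otimes> g = g \<otimes> a}" using g by simp
next
  fix g h assume "g \<in> {g \<in> carrier G. a \<otimes> g = g \<otimes> a}" "h \<in> {g \<in> carrier G. a \<otimes> g = g \<otimes> a}"
  then have g: "g \<in> carrier G" "a \<otimes> g = g \<otimes> a" and h: "h \<in> carrier G" "a \<otimes> h = h \<otimes> a" by auto
  have "a \<otimes> (g \<otimes> h) = (a \<otimes> g) \<otimes> h" using a g(1) h(1) by (simp add: m_assoc)
  also have "\<dots> = g \<otimes> (a \<otimes> h)" using a g h(1) by (simp add: m_assoc)
  also have "\<dots> = (g \<otimes> h) \<otimes> a" using a g(1) h by (simp add: m_assoc)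
  finally show "g \<otimes> h \<in> {g \<in> carrier G. a \<otimes> g = g \<otimes> a}" using g h by simp
qed (use a in auto)

end

lemma DirProd_nat_pow:
  "(g, h) [^]\<^bsub>G \<times>\<times> H\<^esub> (n::nat) = (g [^]\<^bsub>G\<^esub> n, h [^]\<^bsub>H\<^esub> n)"
  by (induction n) (simp_all only: nat_pow_0 nat_pow_Suc one_DirProd mult_DirProd)

lemma DirProd_int_pow:
  assumes "group G" "group H" "g \<in> carrier G" "h \<in> carrier H"
  shows "(g, h) [^]\<^bsub>G \<times>\<times> H\<^esub> (i::int) = (g [^]\<^bsub>G\<^esub> i, h [^]\<^bsub>H\<^esub> i)"
proof -
  have "(g, h) [^]\<^bsub>G \<times>\<times> H\<^esub> (int n) = (g [^]\<^bsub>G\<^esub> (int n), h [^]\<^bsub>H\<^esub> (int n))" for n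
    by (simp add: int_pow_int DirProd_nat_pow)
  moreover have "(g, h) [^]\<^bsub>G \<times>\<times> H\<^esub> (- int n) = (g [^]\<^bsub>G\<^esub> (- int n), h [^]\<^bsub>H\<^esub> (- int n))" for n
    using assms by (simp add: group.int_pow_neg_int DirProd_group DirProd_nat_pow monoid.nat_pow_closed group.is_monoid)
  ultimately show ?thesis by (metis int_cases2)
qed

lemma DirProd_ord:
  assumes G: "group G" and H: "group H" and gh: "g \<in> carrier G" "h \<in> carrier H"
  shows "group.ord (G \<times>\<times> H) (g, h) = lcm (group.ord G g) (group.ord H h)"
proof (rule group.ord_eqI)
  show "group (G \<times>\<times> H)" "(g, h) \<in> carrier (G \<times>\<times> H)" using assms by (simp_all add: DirProd_group)
  fix i :: int
  show "(g, h) [^]\<^bsub>G \<times>\<times> H\<^esub> i = \<one>\<^bsub>G \<times>\<times> H\<^esub> \<longleftrightarrow> int (lcm (group.ord G g) (group.ord H h)) dvd i"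
    using DirProd_int_pow[OF assms, of i] group.int_pow_eq_id[OF G gh(1)] group.int_pow_eq_id[OF H gh(2)]
    by (simp add: lcm_least_iff flip: lcm_int_int_eq)
qed

definition commutator :: "('a, 'b) monoid_scheme \<Rightarrow> 'a \<Rightarrow> 'a \<Rightarrow> 'a" where
  "commutator G x y = x \<otimes>\<^bsub>G\<^esub> y \<otimes>\<^bsub>G\<^esub> inv\<^bsub>G\<^esub> x \<otimes>\<^bsub>G\<^esub> inv\<^bsub>G\<^esub> y"

context normal
begin

lemma commutator_closed_left:
  assumes "n \<in> H" "g \<in> carrier G"
  shows "commutator G n g \<in> H"
proof -
  have "g \<otimes> inv n \<otimes> inv g \<in> H" using assms by (simp add: inv_op_closed2)
  then have "n \<otimes> (g \<otimes> inv n \<otimes> inv g) \<in> H" using assms(1) by simp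
  then show ?thesis using assms by (simp add: commutator_def m_assoc)
qed

lemma commutator_closed_right:
  assumes "g \<in> carrier G" "n \<in> H"
  shows "commutator G g n \<in> H"
  using assms by (simp add: commutator_def inv_op_closed2)

end

lemma (in group_hom) hom_commutator:
  assumes "x \<in> carrier G" "y \<in> carrier G"
  shows "h (commutator G x y) = commutator H (h x) (h y)"
  using assms by (simp add: commutator_def hom_mult hom_inv)

lemma commutator_DirProd:
  assumes "group G" "group H" "g \<in> carrier G" "g' \<in> carrier G" "h \<in> carrier H" "h' \<in> carrier H"
  shows "commutator (G \<times>\<times> H) (g, h) (g', h') = (commutator G g g', commutator H h h')"
  using assms by (simp add: commutator_def inv_DirProd)

lemma DirProd_left_embedding:
  assumes G: "group G" and H: "group H" and \<Lambda>: "\<Lambda> \<in> hom (G \<times>\<times> H) Q" "inj_on \<Lambda> (carrier (G \<times>\<times> H))"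
  shows "(\<lambda>g. \<Lambda> (g, \<one>\<^bsub>H\<^esub>)) \<in> hom G Q" "inj_on (\<lambda>g. \<Lambda> (g, \<one>\<^bsub>H\<^esub>)) (carrier G)"
proof -
  interpret H: group H by (rule H)
  have "(\<lambda>g. (g, \<one>\<^bsub>H\<^esub>)) \<in> hom G (G \<times>\<times> H)" by (rule homI) simp_all
  then show "(\<lambda>g. \<Lambda> (g, \<one>\<^bsub>H\<^esub>)) \<in> hom G Q" using \<Lambda>(1) by (rule hom_compose[unfolded comp_def])
  show "inj_on (\<lambda>g. \<Lambda> (g, \<one>\<^bsub>H\<^esub>)) (carrier G)"
  proof (rule inj_onI)
    fix g g' assume "g \<in> carrier G" "g' \<in> carrier G" "\<Lambda> (g, \<one>\<^bsub>H\<^esub>) = \<Lambda> (g', \<one>\<^bsub>H\<^esub>)"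
    then show "g = g'" using inj_onD[OF \<Lambda>(2), of "(g, \<one>\<^bsub>H\<^esub>)" "(g', \<one>\<^bsub>H\<^esub>)"] by simp
  qed
qed

definition conj_pairs :: "('a, 'b) monoid_scheme \<Rightarrow> 'a \<Rightarrow> 'a \<Rightarrow> ('a \<times> 'a) set" where
  "conj_pairs Q g n = {(g, n), (g \<otimes>\<^bsub>Q\<^esub> n, inv\<^bsub>Q\<^esub> g), (g, inv\<^bsub>Q\<^esub> g)}"

definition commutator_pairs :: "('a, 'b) monoid_scheme \<Rightarrow> 'a \<Rightarrow> 'a \<Rightarrow> ('a \<times> 'a) set" where
  "commutator_pairs Q p q =
     conj_pairs Q p q \<union> {(p \<otimes>\<^bsub>Q\<^esub> q \<otimes>\<^bsub>Q\<^esub> inv\<^bsub>Q\<^esub> p, inv\<^bsub>Q\<^esub> q), (q, inv\<^bsub>Q\<^esub> q)}"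

context
  fixes C :: "nat \<times> nat \<Rightarrow> nat" and Q :: "('q, 'z) monoid_scheme" and l :: "'q \<Rightarrow> nat"
  assumes C: "C \<in> group_tables" and Q: "group Q"
    and l: "\<And>q. q \<in> carrier Q \<Longrightarrow> l q \<in> Npos" "l \<one>\<^bsub>Q\<^esub> = 1"
begin

interpretation C: group "tbl_grp C" using C by (rule group_tbl_grp)
interpretation Q: group Q by (rule Q)

lemma table_inv_eq:
  assumes p: "p \<in> carrier Q" and prod: "C (l p, l (inv\<^bsub>Q\<^esub> p)) = l (p \<otimes>\<^bsub>Q\<^esub> inv\<^bsub>Q\<^esub> p)"
  shows "inv\<^bsub>tbl_grp C\<^esub> (l p) = l (inv\<^bsub>Q\<^esub> p)"
proof -
  have "l p \<otimes>\<^bsub>tbl_grp C\<^esub> l (inv\<^bsub>Q\<^esub> p) = \<one>\<^bsub>tbl_grp C\<^esub>" using prod p l(2) by simp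
  then have "l (inv\<^bsub>Q\<^esub> p) \<otimes>\<^bsub>tbl_grp C\<^esub> l p = \<one>\<^bsub>tbl_grp C\<^esub>"
    by (rule C.inv_comm) (simp_all add: p l(1))
  then show ?thesis by (rule C.inv_equality) (simp_all add: p l(1))
qed

lemma table_conj_eq:
  assumes gn: "g \<in> carrier Q" "n \<in> carrier Q"
    and prod: "\<And>p q. (p, q) \<in> conj_pairs Q g n \<Longrightarrow> C (l p, l q) = l (p \<otimes>\<^bsub>Q\<^esub> q)"
  shows "l (g \<otimes>\<^bsub>Q\<^esub> n \<otimes>\<^bsub>Q\<^esub> inv\<^bsub>Q\<^esub> g) = l g \<otimes>\<^bsub>tbl_grp C\<^esub> l n \<otimes>\<^bsub>tbl_grp C\<^esub> inv\<^bsub>tbl_grp C\<^esub> (l g)"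
proof -
  have "inv\<^bsub>tbl_grp C\<^esub> (l g) = l (inv\<^bsub>Q\<^esub> g)"
    by (rule table_inv_eq[OF gn(1)]) (rule prod, simp add: conj_pairs_def)
  moreover have "C (l g, l n) = l (g \<otimes>\<^bsub>Q\<^esub> n)" by (rule prod) (simp add: conj_pairs_def)
  moreover have "C (l (g \<otimes>\<^bsub>Q\<^esub> n), l (inv\<^bsub>Q\<^esub> g)) = l (g \<otimes>\<^bsub>Q\<^esub> n \<otimes>\<^bsub>Q\<^esub> inv\<^bsub>Q\<^esub> g)"
    by (rule prod) (simp add: conj_pairs_def)
  ultimately show ?thesis by simp
qed

lemma table_commutator_eq:
  assumes pq: "p \<in> carrier Q" "q \<in> carrier Q"
    and prod: "\<And>x y. (x, y) \<in> commutator_pairs Q p q \<Longrightarrow> C (l x, l y) = l (x \<otimes>\<^bsub>Q\<^esub> y)"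
  shows "l (commutator Q p q) = commutator (tbl_grp C) (l p) (l q)"
proof -
  have "l (p \<otimes>\<^bsub>Q\<^esub> q \<otimes>\<^bsub>Q\<^esub> inv\<^bsub>Q\<^esub> p) = l p \<otimes>\<^bsub>tbl_grp C\<^esub> l q \<otimes>\<^bsub>tbl_grp C\<^esub> inv\<^bsub>tbl_grp C\<^esub> (l p)"
    by (rule table_conj_eq[OF pq]) (rule prod, simp add: commutator_pairs_def)
  moreover have "inv\<^bsub>tbl_grp C\<^esub> (l q) = l (inv\<^bsub>Q\<^esub> q)"
    by (rule table_inv_eq[OF pq(2)]) (rule prod, simp add: commutator_pairs_def)
  moreover have "C (l (p \<otimes>\<^bsub>Q\<^esub> q \<otimes>\<^bsub>Q\<^esub> inv\<^bsub>Q\<^esub> p), l (inv\<^bsub>Q\<^esub> q)) = l (commutator Q p q)"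
    unfolding commutator_def by (rule prod) (simp add: commutator_pairs_def)
  ultimately show ?thesis by (simp add: commutator_def)
qed

end

lemma avoidable_near_by_embedding:
  fixes Q :: "('q, 'z) monoid_scheme"
  assumes AG: "A \<in> group_tables" and D: "finite D" and Q: "group Q" "countable (carrier Q)"
    and j: "j \<in> hom (tbl_grp A) Q" "inj_on j Npos" and S0: "finite S0" "S0 \<subseteq> Npos"
    and W: "finite W" "W \<subseteq> carrier Q \<times> carrier Q"
    and avoid: "\<And>C l. C \<in> group_tables \<Longrightarrow> bij_betw l (carrier Q) Npos \<Longrightarrow> l \<one>\<^bsub>Q\<^esub> = 1 \<Longrightarrow>
        (\<And>n. n \<in> S0 \<Longrightarrow> l (j n) = n) \<Longrightarrow>
        (\<And>p q. (p, q) \<in> W \<Longrightarrow> C (l p, l q) = l (p \<otimes>\<^bsub>Q\<^esub> q)) \<Longrightarrow> C \<notin> T"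
  shows "avoidable_near T A D"
proof -
  obtain B l where B: "B \<in> group_tables" "\<forall>p\<in>D. B p = A p" and l: "bij_betw l (carrier Q) Npos"
    "\<And>n. n \<in> S0 \<Longrightarrow> l (j n) = n" "l \<one>\<^bsub>Q\<^esub> = 1"
    and Bl: "\<And>q1 q2. q1 \<in> carrier Q \<Longrightarrow> q2 \<in> carrier Q \<Longrightarrow> B (l q1, l q2) = l (q1 \<otimes>\<^bsub>Q\<^esub> q2)"
    by (rule group_table_extension[OF AG D Q j S0]) (rule that)
  define D' where "D' = (\<lambda>(p, q). (l p, l q)) ` W"
  have "C \<notin> T" if C: "C \<in> group_tables" "\<forall>p\<in>D'. C p = B p" for C
  proof (rule avoid[OF C(1) l(1) l(3) l(2)])
    fix p q assume pq: "(p, q) \<in> W"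
    then have "C (l p, l q) = B (l p, l q)" using C(2) by (force simp: D'_def)
    also have "\<dots> = l (p \<otimes>\<^bsub>Q\<^esub> q)" using Bl W(2) pq by blast
    finally show "C (l p, l q) = l (p \<otimes>\<^bsub>Q\<^esub> q)" .
  qed
  moreover have "finite D'" using W(1) by (simp add: D'_def)
  ultimately show ?thesis using B unfolding avoidable_near_def by blast
qed

section \<open>Making two elements conjugate\<close>

context group
begin

definition cyclic_orbit :: "'a \<Rightarrow> 'a \<Rightarrow> 'a set" where
  "cyclic_orbit u p = range (\<lambda>i::int. u [^] i \<otimes> p)"

lemma cyclic_orbit_eq_rcos: "u \<in> carrier G \<Longrightarrow> cyclic_orbit u p = generate G {u} #> p"
  by (auto simp: cyclic_orbit_def generate_pow r_coset_def)

lemma rcosets_cyclic_eq: "u \<in> carrier G \<Longrightarrow> rcosets (generate G {u}) = cyclic_orbit u ` carrier G"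
  by (auto simp: RCOSETS_def cyclic_orbit_eq_rcos)

lemma cyclic_orbit_self: "u \<in> carrier G \<Longrightarrow> p \<in> carrier G \<Longrightarrow> p \<in> cyclic_orbit u p"
  unfolding cyclic_orbit_def by (rule range_eqI[where x=0]) simp

lemma cyclic_orbit_subset: "u \<in> carrier G \<Longrightarrow> p \<in> carrier G \<Longrightarrow> cyclic_orbit u p \<subseteq> carrier G"
  unfolding cyclic_orbit_def by auto

lemma cyclic_orbit_eq:
  assumes u: "u \<in> carrier G" and p: "p \<in> carrier G" and q: "q \<in> cyclic_orbit u p"
  shows "cyclic_orbit u q = cyclic_orbit u p"
proof -
  obtain i :: int where qi: "q = u [^] i \<otimes> p" using q unfolding cyclic_orbit_def by blast
  have q_shift: "u [^] k \<otimes> q = u [^] (k + i) \<otimes> p" for k :: int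
    using u p by (simp add: qi int_pow_mult m_assoc)
  have p_shift: "u [^] k \<otimes> p = u [^] (k - i) \<otimes> q" for k :: int
    using q_shift[of "k - i"] by simp
  show ?thesis
  proof (intro equalityI subsetI)
    fix x assume "x \<in> cyclic_orbit u q"
    then obtain k :: int where "x = u [^] k \<otimes> q" unfolding cyclic_orbit_def by blast
    then show "x \<in> cyclic_orbit u p" unfolding cyclic_orbit_def q_shift by blast
  next
    fix x assume "x \<in> cyclic_orbit u p"
    then obtain k :: int where "x = u [^] k \<otimes> p" unfolding cyclic_orbit_def by blast
    then show "x \<in> cyclic_orbit u q" unfolding cyclic_orbit_def p_shift by blast
  qed
qed

definition orbit_rep :: "'a set \<Rightarrow> 'a" where
  "orbit_rep X = (SOME x. x \<in> X)"

definition orbit_index :: "'a \<Rightarrow> 'a \<Rightarrow> int" where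
  "orbit_index u p = (SOME i. p = u [^] i \<otimes> orbit_rep (cyclic_orbit u p))"

definition conj_map :: "'a \<Rightarrow> 'a \<Rightarrow> ('a set \<Rightarrow> 'a set) \<Rightarrow> 'a \<Rightarrow> 'a" where
  "conj_map u v \<phi> p = v [^] (orbit_index u p) \<otimes> orbit_rep (\<phi> (cyclic_orbit u p))"

lemma orbit_rep:
  assumes "u \<in> carrier G" "p \<in> carrier G"
  shows "orbit_rep (cyclic_orbit u p) \<in> cyclic_orbit u p" "orbit_rep (cyclic_orbit u p) \<in> carrier G"
proof -
  show *: "orbit_rep (cyclic_orbit u p) \<in> cyclic_orbit u p"
    unfolding orbit_rep_def using cyclic_orbit_self[OF assms] by (metis someI_ex)
  show "orbit_rep (cyclic_orbit u p) \<in> carrier G" using * cyclic_orbit_subset[OF assms] by blast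
qed

lemma orbit_index:
  assumes u: "u \<in> carrier G" and p: "p \<in> carrier G"
  shows "p = u [^] (orbit_index u p) \<otimes> orbit_rep (cyclic_orbit u p)"
proof -
  have "cyclic_orbit u (orbit_rep (cyclic_orbit u p)) = cyclic_orbit u p"
    by (rule cyclic_orbit_eq[OF u p orbit_rep(1)[OF u p]])
  then have "p \<in> cyclic_orbit u (orbit_rep (cyclic_orbit u p))" using cyclic_orbit_self[OF u p] by simp
  then have "\<exists>i::int. p = u [^] i \<otimes> orbit_rep (cyclic_orbit u p)" unfolding cyclic_orbit_def by blast
  then show ?thesis unfolding orbit_index_def by (rule someI_ex)
qed

lemma conj_map_eq:
  assumes u: "u \<in> carrier G" and v: "v \<in> carrier G" and p: "p \<in> carrier G"
    and ord: "ord u = ord v" and pi: "p = u [^] (i::int) \<otimes> orbit_rep (cyclic_orbit u p)"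
  shows "conj_map u v \<phi> p = v [^] i \<otimes> orbit_rep (\<phi> (cyclic_orbit u p))"
proof -
  have "u [^] (orbit_index u p) \<otimes> orbit_rep (cyclic_orbit u p) = u [^] i \<otimes> orbit_rep (cyclic_orbit u p)"
    using orbit_index[OF u p] pi by simp
  then have "u [^] (orbit_index u p) = u [^] i" using u p orbit_rep(2) by simp
  then have "v [^] (orbit_index u p) = v [^] i" using u v ord by (simp add: int_pow_eq)
  then show ?thesis by (simp add: conj_map_def)
qed

lemma conj_map_closed:
  assumes u: "u \<in> carrier G" and v: "v \<in> carrier G" and p: "p \<in> carrier G"
    and \<phi>: "\<phi> \<in> cyclic_orbit u ` carrier G \<rightarrow> cyclic_orbit v ` carrier G"
  shows "conj_map u v \<phi> p \<in> carrier G" "cyclic_orbit v (conj_map u v \<phi> p) = \<phi> (cyclic_orbit u p)"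
    "orbit_rep (\<phi> (cyclic_orbit u p)) \<in> carrier G"
proof -
  obtain q where q: "q \<in> carrier G" "\<phi> (cyclic_orbit u p) = cyclic_orbit v q" using \<phi> p by blast
  have r: "orbit_rep (cyclic_orbit v q) \<in> carrier G" by (rule orbit_rep(2)[OF v q(1)])
  have mem: "conj_map u v \<phi> p \<in> cyclic_orbit v (orbit_rep (cyclic_orbit v q))"
    unfolding conj_map_def q(2) unfolding cyclic_orbit_def by (rule rangeI)
  have eq: "cyclic_orbit v (orbit_rep (cyclic_orbit v q)) = cyclic_orbit v q"
    by (rule cyclic_orbit_eq[OF v q(1) orbit_rep(1)[OF v q(1)]])
  show "conj_map u v \<phi> p \<in> carrier G" using mem cyclic_orbit_subset[OF v r] by blast
  show "cyclic_orbit v (conj_map u v \<phi> p) = \<phi> (cyclic_orbit u p)"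
    using cyclic_orbit_eq[OF v r mem] eq q(2) by simp
  show "orbit_rep (\<phi> (cyclic_orbit u p)) \<in> carrier G" using r q(2) by simp
qed

lemma conj_map_mult:
  assumes u: "u \<in> carrier G" and v: "v \<in> carrier G" and p: "p \<in> carrier G"
    and ord: "ord u = ord v"
    and \<phi>: "\<phi> \<in> cyclic_orbit u ` carrier G \<rightarrow> cyclic_orbit v ` carrier G"
  shows "conj_map u v \<phi> (u \<otimes> p) = v \<otimes> conj_map u v \<phi> p"
proof -
  have "u \<otimes> p \<in> cyclic_orbit u p"
    unfolding cyclic_orbit_def using u p by (intro range_eqI[where x=1]) auto
  then have orb: "cyclic_orbit u (u \<otimes> p) = cyclic_orbit u p" by (rule cyclic_orbit_eq[OF u p])
  have "u \<otimes> p = u \<otimes> (u [^] (orbit_index u p) \<otimes> orbit_rep (cyclic_orbit u p))"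
    using orbit_index[OF u p] by simp
  also have "\<dots> = u [^] (1 + orbit_index u p) \<otimes> orbit_rep (cyclic_orbit u (u \<otimes> p))"
    using u orbit_rep(2)[OF u p] orb by (simp add: int_pow_mult m_assoc)
  finally have "conj_map u v \<phi> (u \<otimes> p) =
      v [^] (1 + orbit_index u p) \<otimes> orbit_rep (\<phi> (cyclic_orbit u (u \<otimes> p)))"
    using u v p ord by (intro conj_map_eq) auto
  also have "\<dots> = v \<otimes> (v [^] (orbit_index u p) \<otimes> orbit_rep (\<phi> (cyclic_orbit u p)))"
    using v orb conj_map_closed(3)[OF u v p \<phi>] by (simp add: int_pow_mult m_assoc)
  finally show ?thesis by (simp add: conj_map_def)
qed

lemma conj_map_inverse:
  assumes u: "u \<in> carrier G" and v: "v \<in> carrier G" and p: "p \<in> carrier G"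
    and ord: "ord u = ord v"
    and \<phi>: "\<phi> \<in> cyclic_orbit u ` carrier G \<rightarrow> cyclic_orbit v ` carrier G"
    and \<psi>: "\<And>X. X \<in> cyclic_orbit u ` carrier G \<Longrightarrow> \<psi> (\<phi> X) = X"
  shows "conj_map v u \<psi> (conj_map u v \<phi> p) = p"
proof -
  define q where "q = conj_map u v \<phi> p"
  have q: "q \<in> carrier G" "cyclic_orbit v q = \<phi> (cyclic_orbit u p)"
    unfolding q_def using conj_map_closed[OF u v p \<phi>] by auto
  then have "q = v [^] (orbit_index u p) \<otimes> orbit_rep (cyclic_orbit v q)"
    by (simp add: q_def conj_map_def)
  then have "conj_map v u \<psi> q = u [^] (orbit_index u p) \<otimes> orbit_rep (\<psi> (cyclic_orbit v q))"
    using u v ord q(1) by (intro conj_map_eq) auto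
  also have "\<dots> = p" using q(2) \<psi> p orbit_index[OF u p] by simp
  finally show ?thesis by (simp add: q_def)
qed

lemma conjugating_bijection:
  assumes cG: "countable (carrier G)" and u: "u \<in> carrier G" and v: "v \<in> carrier G"
    and ord: "ord u = ord v"
    and iu: "infinite (rcosets (generate G {u}))" and iv: "infinite (rcosets (generate G {v}))"
  obtains g where "bij_betw g (carrier G) (carrier G)" "\<And>p. p \<in> carrier G \<Longrightarrow> g (u \<otimes> p) = v \<otimes> g p"
proof -
  obtain \<phi> where \<phi>: "bij_betw \<phi> (cyclic_orbit u ` carrier G) (cyclic_orbit v ` carrier G)"
    using countably_infinite_bij_betw iu iv cG by (metis countable_image rcosets_cyclic_eq u v)
  define \<psi> where "\<psi> = inv_into (cyclic_orbit u ` carrier G) \<phi>"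
  have \<psi>: "bij_betw \<psi> (cyclic_orbit v ` carrier G) (cyclic_orbit u ` carrier G)"
    unfolding \<psi>_def by (rule bij_betw_inv_into[OF \<phi>])
  have \<phi>_fun: "\<phi> \<in> cyclic_orbit u ` carrier G \<rightarrow> cyclic_orbit v ` carrier G"
    and \<psi>_fun: "\<psi> \<in> cyclic_orbit v ` carrier G \<rightarrow> cyclic_orbit u ` carrier G"
    using bij_betw_imp_funcset[OF \<phi>] bij_betw_imp_funcset[OF \<psi>] by auto
  have "bij_betw (conj_map u v \<phi>) (carrier G) (carrier G)"
  proof (rule bij_betw_byWitness[where f'="conj_map v u \<psi>"])
    show "\<forall>p\<in>carrier G. conj_map v u \<psi> (conj_map u v \<phi> p) = p"
      using conj_map_inverse[OF u v _ ord \<phi>_fun] bij_betw_inv_into_left[OF \<phi>] by (simp add: \<psi>_def)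
    show "\<forall>p\<in>carrier G. conj_map u v \<phi> (conj_map v u \<psi> p) = p"
      using conj_map_inverse[OF v u _ ord[symmetric] \<psi>_fun] bij_betw_inv_into_right[OF \<phi>]
      by (simp add: \<psi>_def)
    show "conj_map u v \<phi> ` carrier G \<subseteq> carrier G" using conj_map_closed(1)[OF u v _ \<phi>_fun] by blast
    show "conj_map v u \<psi> ` carrier G \<subseteq> carrier G" using conj_map_closed(1)[OF v u _ \<psi>_fun] by blast
  qed
  then show ?thesis using that conj_map_mult[OF u v _ ord \<phi>_fun] by blast
qed

end

definition left_translation :: "('a, 'b) monoid_scheme \<Rightarrow> 'a \<Rightarrow> 'a \<Rightarrow> 'a" where
  "left_translation G p = (\<lambda>x\<in>carrier G. p \<otimes>\<^bsub>G\<^esub> x)"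

definition conjugable :: "('a, 'b) monoid_scheme \<Rightarrow> 'a \<Rightarrow> 'a \<Rightarrow> bool" where
  "conjugable G u v \<longleftrightarrow> u \<in> carrier G \<and> v \<in> carrier G \<and> group.ord G u = group.ord G v \<and>
     infinite (rcosets\<^bsub>G\<^esub> (generate G {u})) \<and> infinite (rcosets\<^bsub>G\<^esub> (generate G {v}))"

lemma carrier_BijGroup [simp]: "carrier (BijGroup S) = Bij S"
  by (simp add: BijGroup_def)

lemma BijGroup_mult: "f \<in> Bij S \<Longrightarrow> g \<in> Bij S \<Longrightarrow> f \<otimes>\<^bsub>BijGroup S\<^esub> g = compose S f g"
  by (simp add: BijGroup_def)

context group
begin

lemma left_translation_Bij: "p \<in> carrier G \<Longrightarrow> left_translation G p \<in> Bij (carrier G)"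
  unfolding left_translation_def Bij_def
  by (auto intro!: bij_betw_byWitness[where f'="\<lambda>x. inv p \<otimes> x"] simp: m_assoc[symmetric])

lemma left_translation_hom: "left_translation G \<in> hom G (BijGroup (carrier G))"
proof (rule homI)
  fix p q assume "p \<in> carrier G" "q \<in> carrier G"
  then show "left_translation G (p \<otimes> q) =
      left_translation G p \<otimes>\<^bsub>BijGroup (carrier G)\<^esub> left_translation G q"
    by (simp add: BijGroup_mult left_translation_Bij)
      (auto simp: compose_def left_translation_def m_assoc fun_eq_iff)
qed (simp add: left_translation_Bij)

lemma inj_on_left_translation: "inj_on (left_translation G) (carrier G)"
proof (rule inj_onI)
  fix p q assume pq: "p \<in> carrier G" "q \<in> carrier G" "left_translation G p = left_translation G q"
  then have "left_translation G p \<one> = left_translation G q \<one>" by simp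
  then show "p = q" using pq by (simp add: left_translation_def)
qed

lemma left_translations_conjugate:
  assumes "countable (carrier G)" "conjugable G u v"
  shows "\<exists>g\<in>carrier (BijGroup (carrier G)).
    g \<otimes>\<^bsub>BijGroup (carrier G)\<^esub> left_translation G u \<otimes>\<^bsub>BijGroup (carrier G)\<^esub> inv\<^bsub>BijGroup (carrier G)\<^esub> g
      = left_translation G v"
proof -
  interpret BG: group "BijGroup (carrier G)" by (rule group_BijGroup)
  obtain g where g: "bij_betw g (carrier G) (carrier G)" "\<And>p. p \<in> carrier G \<Longrightarrow> g (u \<otimes> p) = v \<otimes> g p"
    using conjugating_bijection assms unfolding conjugable_def by blast
  have uv: "u \<in> carrier G" "v \<in> carrier G" using assms(2) by (simp_all add: conjugable_def)
  have gB: "restrict g (carrier G) \<in> Bij (carrier G)"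
    using g(1) by (simp add: Bij_def bij_betw_cong[of "carrier G" "restrict g (carrier G)" g])
  have uvB: "left_translation G u \<in> Bij (carrier G)" "left_translation G v \<in> Bij (carrier G)"
    using uv left_translation_Bij by simp_all
  have "compose (carrier G) (restrict g (carrier G)) (left_translation G u) =
      compose (carrier G) (left_translation G v) (restrict g (carrier G))"
  proof
    fix x show "compose (carrier G) (restrict g (carrier G)) (left_translation G u) x =
        compose (carrier G) (left_translation G v) (restrict g (carrier G)) x"
    proof (cases "x \<in> carrier G")
      case True
      then show ?thesis using g(2)[OF True] bij_betw_apply[OF g(1) True] uv
        by (simp add: compose_def left_translation_def)
    qed (simp add: compose_def)
  qed
  then have "restrict g (carrier G) \<otimes>\<^bsub>BijGroup (carrier G)\<^esub> left_translation G u =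
      left_translation G v \<otimes>\<^bsub>BijGroup (carrier G)\<^esub> restrict g (carrier G)"
    using gB uvB by (simp add: BijGroup_mult)
  then show ?thesis using gB uvB
    by (intro bexI[where x="restrict g (carrier G)"])
      (simp_all, metis BG.inv_closed BG.m_assoc BG.r_inv BG.r_one carrier_BijGroup)
qed

end

text \<open>The left regular representation of \<open>P\<close>, enlarged by the conjugating bijections, gives
  a countable group in which every given pair becomes conjugate.\<close>

lemma embedding_conjugating_pairs:
  fixes P :: "('p, 'z) monoid_scheme"
  assumes P: "group P" "countable (carrier P)" and Prs: "countable Prs"
    and pairs: "\<And>u v. (u, v) \<in> Prs \<Longrightarrow> conjugable P u v"
  obtains Q :: "('p \<Rightarrow> 'p) monoid" and \<Lambda> where "group Q" "countable (carrier Q)"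
    "\<Lambda> \<in> hom P Q" "inj_on \<Lambda> (carrier P)"
    "\<And>u v. (u, v) \<in> Prs \<Longrightarrow> \<exists>g\<in>carrier Q. g \<otimes>\<^bsub>Q\<^esub> \<Lambda> u \<otimes>\<^bsub>Q\<^esub> inv\<^bsub>Q\<^esub> g = \<Lambda> v"
proof -
  interpret P: group P by (rule P(1))
  define BG where "BG = BijGroup (carrier P)"
  interpret BG: group BG unfolding BG_def by (rule group_BijGroup)
  have "\<forall>uv\<in>Prs. \<exists>g\<in>carrier BG.
      g \<otimes>\<^bsub>BG\<^esub> left_translation P (fst uv) \<otimes>\<^bsub>BG\<^esub> inv\<^bsub>BG\<^esub> g = left_translation P (snd uv)"
    using P.left_translations_conjugate P(2) pairs unfolding BG_def by fastforce
  then obtain conj where conj: "\<And>uv. uv \<in> Prs \<Longrightarrow> conj uv \<in> carrier BG"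
    "\<And>uv. uv \<in> Prs \<Longrightarrow> conj uv \<otimes>\<^bsub>BG\<^esub> left_translation P (fst uv) \<otimes>\<^bsub>BG\<^esub> inv\<^bsub>BG\<^esub> conj uv
        = left_translation P (snd uv)"
    by metis
  define Q where "Q = subgroup_generated BG (left_translation P ` carrier P \<union> conj ` Prs)"
  have gens: "left_translation P ` carrier P \<union> conj ` Prs \<subseteq> carrier BG"
    using conj(1) P.left_translation_hom by (auto simp: BG_def hom_def)
  then have cQ: "carrier Q = generate BG (left_translation P ` carrier P \<union> conj ` Prs)"
    by (simp add: Q_def carrier_subgroup_generated Int_absorb1)
  have "countable (carrier Q)"
    unfolding cQ using gens P(2) Prs by (intro BG.countable_generate) auto
  moreover have "group Q" unfolding Q_def by simp
  moreover have hom: "left_translation P \<in> hom P Q"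
  proof (rule homI)
    fix x assume "x \<in> carrier P"
    then show "left_translation P x \<in> carrier Q" unfolding cQ by (auto intro: generate.incl)
  next
    fix x y assume "x \<in> carrier P" "y \<in> carrier P"
    then show "left_translation P (x \<otimes>\<^bsub>P\<^esub> y) = left_translation P x \<otimes>\<^bsub>Q\<^esub> left_translation P y"
      using P.left_translation_hom by (simp add: Q_def BG_def hom_def)
  qed
  moreover have "\<exists>g\<in>carrier Q. g \<otimes>\<^bsub>Q\<^esub> left_translation P u \<otimes>\<^bsub>Q\<^esub> inv\<^bsub>Q\<^esub> g = left_translation P v"
    if uv: "(u, v) \<in> Prs" for u v
  proof
    show gQ: "conj (u, v) \<in> carrier Q" unfolding cQ using uv by (auto intro: generate.incl)
    then show "conj (u, v) \<otimes>\<^bsub>Q\<^esub> left_translation P u \<otimes>\<^bsub>Q\<^esub> inv\<^bsub>Q\<^esub> conj (u, v) = left_translation P v"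
      using conj(2)[OF uv] by (simp add: Q_def BG.inv_subgroup_generated)
  qed
  ultimately show ?thesis using that P.inj_on_left_translation by blast
qed

lemma infinite_rcosets_DirProd_left:
  assumes G1: "group G1" and G2: "group G2" and h0: "h0 \<in> carrier G1" and k0: "k0 \<in> carrier G2"
    and dvd: "group.ord G1 h0 dvd group.ord G2 k0" and inf: "infinite (carrier G1)"
  shows "infinite (rcosets\<^bsub>G1 \<times>\<times> G2\<^esub> (generate (G1 \<times>\<times> G2) {(h0, k0)}))"
proof -
  interpret G1: group G1 by (rule G1)
  interpret G2: group G2 by (rule G2)
  interpret P: group "G1 \<times>\<times> G2" by (rule DirProd_group[OF G1 G2])
  define f where "f h = P.cyclic_orbit (h0, k0) (h, \<one>\<^bsub>G2\<^esub>)" for h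
  have u: "(h0, k0) \<in> carrier (G1 \<times>\<times> G2)" using h0 k0 by simp
  have "inj_on f (carrier G1)"
  proof (rule inj_onI)
    fix h h' assume hh: "h \<in> carrier G1" "h' \<in> carrier G1" "f h = f h'"
    then have "(h', \<one>\<^bsub>G2\<^esub>) \<in> f h" unfolding f_def using P.cyclic_orbit_self[OF u] by simp
    then obtain i :: int where "(h', \<one>\<^bsub>G2\<^esub>) = (h0 [^]\<^bsub>G1\<^esub> i \<otimes>\<^bsub>G1\<^esub> h, k0 [^]\<^bsub>G2\<^esub> i)"
      using DirProd_int_pow[OF G1 G2 h0 k0] k0 unfolding f_def P.cyclic_orbit_def by auto
    then have "k0 [^]\<^bsub>G2\<^esub> i = \<one>\<^bsub>G2\<^esub>" "h' = h0 [^]\<^bsub>G1\<^esub> i \<otimes>\<^bsub>G1\<^esub> h" by auto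
    moreover from this(1) have "h0 [^]\<^bsub>G1\<^esub> i = \<one>\<^bsub>G1\<^esub>"
      using dvd G1.int_pow_eq_id[OF h0] G2.int_pow_eq_id[OF k0] by (meson dvd_trans int_dvd_int_iff)
    ultimately show "h = h'" using hh(1) by simp
  qed
  then have "infinite (f ` carrier G1)" using inf finite_imageD by blast
  moreover have "f ` carrier G1 \<subseteq> P.cyclic_orbit (h0, k0) ` carrier (G1 \<times>\<times> G2)"
    unfolding f_def by auto
  ultimately show ?thesis using P.rcosets_cyclic_eq[OF u] finite_subset by (metis (no_types))
qed

lemma infinite_rcosets_DirProd_right:
  assumes G1: "group G1" and G2: "group G2" and h0: "h0 \<in> carrier G1" and k0: "k0 \<in> carrier G2"
    and dvd: "group.ord G2 k0 dvd group.ord G1 h0" and inf: "infinite (carrier G2)"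
  shows "infinite (rcosets\<^bsub>G1 \<times>\<times> G2\<^esub> (generate (G1 \<times>\<times> G2) {(h0, k0)}))"
proof -
  interpret G1: group G1 by (rule G1)
  interpret G2: group G2 by (rule G2)
  interpret P: group "G1 \<times>\<times> G2" by (rule DirProd_group[OF G1 G2])
  define f where "f k = P.cyclic_orbit (h0, k0) (\<one>\<^bsub>G1\<^esub>, k)" for k
  have u: "(h0, k0) \<in> carrier (G1 \<times>\<times> G2)" using h0 k0 by simp
  have "inj_on f (carrier G2)"
  proof (rule inj_onI)
    fix k k' assume kk: "k \<in> carrier G2" "k' \<in> carrier G2" "f k = f k'"
    then have "(\<one>\<^bsub>G1\<^esub>, k') \<in> f k" unfolding f_def using P.cyclic_orbit_self[OF u] by simp
    then obtain i :: int where "(\<one>\<^bsub>G1\<^esub>, k') = (h0 [^]\<^bsub>G1\<^esub> i, k0 [^]\<^bsub>G2\<^esub> i \<otimes>\<^bsub>G2\<^esub> k)"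
      using DirProd_int_pow[OF G1 G2 h0 k0] h0 unfolding f_def P.cyclic_orbit_def by auto
    then have "h0 [^]\<^bsub>G1\<^esub> i = \<one>\<^bsub>G1\<^esub>" "k' = k0 [^]\<^bsub>G2\<^esub> i \<otimes>\<^bsub>G2\<^esub> k" by auto
    moreover from this(1) have "k0 [^]\<^bsub>G2\<^esub> i = \<one>\<^bsub>G2\<^esub>"
      using dvd G1.int_pow_eq_id[OF h0] G2.int_pow_eq_id[OF k0] by (meson dvd_trans int_dvd_int_iff)
    ultimately show "k = k'" using kk(1) by simp
  qed
  then have "infinite (f ` carrier G2)" using inf finite_imageD by blast
  moreover have "f ` carrier G2 \<subseteq> P.cyclic_orbit (h0, k0) ` carrier (G1 \<times>\<times> G2)"
    unfolding f_def by auto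
  ultimately show ?thesis using P.rcosets_cyclic_eq[OF u] finite_subset by (metis (no_types))
qed

section \<open>Rotations and translations of the complex plane\<close>

text \<open>The pair \<open>(a, b)\<close> stands for the affine map \<open>z \<mapsto> a * z + b\<close>; multiplication is composition.\<close>

definition affine_group :: "('a::field \<times> 'a) monoid" where
  "affine_group = \<lparr>carrier = {p. fst p \<noteq> 0},
     mult = (\<lambda>x y. (fst x * fst y, fst x * snd y + snd x)), one = (1, 0)\<rparr>"

lemma affine_group_simps [simp]:
  "carrier affine_group = {p. fst p \<noteq> 0}"
  "x \<otimes>\<^bsub>affine_group\<^esub> y = (fst x * fst y, fst x * snd y + snd x)"
  "\<one>\<^bsub>affine_group\<^esub> = (1, 0)"
  by (simp_all add: affine_group_def)

lemma group_affine_group: "group affine_group"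
proof (rule groupI)
  fix x :: "'a \<times> 'a" assume "x \<in> carrier affine_group"
  then show "\<exists>y\<in>carrier affine_group. y \<otimes>\<^bsub>affine_group\<^esub> x = \<one>\<^bsub>affine_group\<^esub>"
    by (intro bexI[where x="(1 / fst x, - snd x / fst x)"]) (auto simp: field_simps)
qed (auto simp: algebra_simps)

interpretation affine: group "affine_group :: ('a::field \<times> 'a) monoid"
  by (rule group_affine_group)

lemma affine_inv: "a \<noteq> 0 \<Longrightarrow> inv\<^bsub>affine_group\<^esub> (a, b) = (1 / a, - b / a)"
  by (rule affine.inv_equality) (auto simp: field_simps)

lemma affine_int_pow_translation:
  "(1, b) [^]\<^bsub>affine_group\<^esub> (i::int) = (1, of_int i * (b::'a::field))"
proof -
  have nat: "(1, b) [^]\<^bsub>affine_group\<^esub> (n::nat) = (1, of_nat n * b)" for n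
    by (induction n) (auto simp: algebra_simps)
  show ?thesis
    by (cases i rule: int_cases2) (simp_all add: affine.int_pow_neg_int nat affine_inv int_pow_int)
qed

lemma affine_int_pow_scaling:
  assumes "(a::'a::field) \<noteq> 0"
  shows "(a, 0) [^]\<^bsub>affine_group\<^esub> (i::int) = (a powi i, 0)"
proof -
  have nat: "(a, 0) [^]\<^bsub>affine_group\<^esub> (n::nat) = (a ^ n, 0)" for n
    by (induction n) auto
  show ?thesis
  proof (rule int_cases2[of i])
    fix n assume "i = int n"
    then show ?thesis by (simp add: int_pow_int nat)
  next
    fix n assume "i = - int n"
    then show ?thesis using assms by (simp add: affine.int_pow_neg_int nat affine_inv power_int_minus divide_inverse)
  qed
qed

text \<open>\<open>root_of_order k\<close> has multiplicative order exactly \<open>k\<close>; for \<open>k = 0\<close> this means infinite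
  order, as for \<open>ord\<close>.\<close>

definition root_of_order :: "nat \<Rightarrow> complex" where
  "root_of_order k = (if k = 0 then 2 else exp (2 * pi * \<i> / of_nat k))"

lemma root_of_order_nonzero [simp]: "root_of_order k \<noteq> 0"
  by (simp add: root_of_order_def)

lemma root_of_order_pow_eq_1: "root_of_order k ^ m = 1 \<longleftrightarrow> k dvd m"
proof (cases "k = 0")
  case True
  have "(2::complex) ^ m = 1 \<longleftrightarrow> m = 0"
  proof
    assume "(2::complex) ^ m = 1"
    then have "(2::real) ^ m = 1" by (metis norm_numeral norm_one norm_power)
    then show "m = 0" using one_less_power[of "2::real" m] by (cases "m = 0") auto
  qed simp
  then show ?thesis using True by (simp add: root_of_order_def)
next
  case False
  have "root_of_order k ^ m = exp (of_nat m * (2 * pi * \<i> / of_nat k))"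
    using False by (simp add: root_of_order_def exp_of_nat_mult[symmetric])
  also have "\<dots> = exp (\<i> * complex_of_real (2 * pi * real m / real k))"
    by (simp add: field_simps)
  finally have "root_of_order k ^ m = 1 \<longleftrightarrow> (\<exists>n::int. 2 * pi * real m / real k = of_int (2 * n) * pi)"
    by (simp add: exp_eq_1)
  also have "\<dots> \<longleftrightarrow> (\<exists>n::int. real m = of_int n * real k)"
    using False by (auto simp: field_simps)
  also have "\<dots> \<longleftrightarrow> k dvd m"
  proof
    assume "\<exists>n::int. real m = of_int n * real k"
    then obtain n :: int where "real m = of_int n * real k" by blast
    then have "int m = n * int k" by (metis of_int_eq_iff of_int_mult of_int_of_nat_eq)
    then show "k dvd m" by (metis dvd_triv_right int_dvd_int_iff)
  next
    assume "k dvd m"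
    then obtain c where "m = k * c" by blast
    then show "\<exists>n::int. real m = of_int n * real k" by (intro exI[where x="int c"]) simp
  qed
  finally show ?thesis .
qed

lemma root_of_order_power_int_eq_1: "root_of_order k powi i = 1 \<longleftrightarrow> int k dvd i"
  by (cases i rule: int_cases2) (simp_all add: power_int_minus root_of_order_pow_eq_1)

definition rot_trans_group :: "nat \<Rightarrow> (complex \<times> complex) monoid" where
  "rot_trans_group k = subgroup_generated affine_group {(root_of_order k, 0), (1, 1)}"

lemma group_rot_trans_group: "group (rot_trans_group k)"
  unfolding rot_trans_group_def by (rule affine.group_subgroup_generated)

lemma carrier_rot_trans_group:
  "carrier (rot_trans_group k) = generate affine_group {(root_of_order k, 0), (1, 1)}"
  by (simp add: rot_trans_group_def carrier_subgroup_generated Int_absorb1)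

lemma rot_trans_group_gens:
  "(root_of_order k, 0) \<in> carrier (rot_trans_group k)" "(1, 1) \<in> carrier (rot_trans_group k)"
  unfolding carrier_rot_trans_group by (auto intro: generate.incl)

lemma rot_trans_group_simps [simp]:
  "x \<otimes>\<^bsub>rot_trans_group k\<^esub> y = x \<otimes>\<^bsub>affine_group\<^esub> y"
  "\<one>\<^bsub>rot_trans_group k\<^esub> = (1, 0)"
  by (simp_all add: rot_trans_group_def)

lemma rot_trans_group_inv:
  "x \<in> carrier (rot_trans_group k) \<Longrightarrow> inv\<^bsub>rot_trans_group k\<^esub> x = inv\<^bsub>affine_group\<^esub> x"
  unfolding rot_trans_group_def by (rule affine.inv_subgroup_generated) (simp add: rot_trans_group_def)

lemma rot_trans_group_int_pow:
  "x \<in> carrier (rot_trans_group k) \<Longrightarrow> x [^]\<^bsub>rot_trans_group k\<^esub> (i::int) = x [^]\<^bsub>affine_group\<^esub> i"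
  unfolding rot_trans_group_def by (rule affine.int_pow_subgroup_generated) (simp add: rot_trans_group_def)

lemma countable_rot_trans_group: "countable (carrier (rot_trans_group k))"
  unfolding carrier_rot_trans_group by (rule affine.countable_generate) auto

lemma ord_rot_trans_group_rotation: "group.ord (rot_trans_group k) (root_of_order k, 0) = k"
  using rot_trans_group_gens(1)
  by (intro group.ord_eqI group_rot_trans_group)
    (simp_all add: rot_trans_group_int_pow affine_int_pow_scaling root_of_order_power_int_eq_1)

lemma ord_rot_trans_group_translation:
  assumes "(1, b) \<in> carrier (rot_trans_group k)" "b \<noteq> 0"
  shows "group.ord (rot_trans_group k) (1, b) = 0"
  using assms by (intro group.ord_eqI group_rot_trans_group)
    (simp_all add: rot_trans_group_int_pow affine_int_pow_translation)

lemma infinite_rot_trans_group: "infinite (carrier (rot_trans_group k))"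
proof -
  interpret K: group "rot_trans_group k" by (rule group_rot_trans_group)
  have "(1, of_int i) \<in> carrier (rot_trans_group k)" for i :: int
    using K.int_pow_closed[OF rot_trans_group_gens(2), of i]
    by (simp add: rot_trans_group_int_pow rot_trans_group_gens affine_int_pow_translation)
  then have "range (\<lambda>i::int. (1::complex, of_int i :: complex)) \<subseteq> carrier (rot_trans_group k)" by auto
  moreover have "inj (\<lambda>i::int. (1::complex, of_int i :: complex))" by (rule injI) simp
  ultimately show ?thesis by (meson finite_imageD finite_subset infinite_UNIV_int)
qed

lemma commutator_rotation_translation:
  "commutator (rot_trans_group k) (root_of_order k, 0) (1, 1) = (1, root_of_order k - 1)"
  using rot_trans_group_gens
  by (simp add: commutator_def rot_trans_group_inv affine_inv field_simps)

section \<open>Elements of infinite order\<close>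

lemma not_dvd_two_pow_minus_one:
  fixes n :: nat
  assumes "1 < n"
  shows "\<not> n dvd 2 ^ n - 1"
proof
  assume dvd: "n dvd 2 ^ n - 1"
  define p where "p = (LEAST q. prime q \<and> q dvd n)"
  have "\<exists>q. prime q \<and> q dvd n" using prime_factor_nat[of n] assms by auto
  then have p: "prime p \<and> p dvd n" unfolding p_def by (rule LeastI_ex)
  then have p: "prime p" "p dvd n" by auto
  have p_least: "p \<le> q" if "prime q" "q dvd n" for q
    unfolding p_def using that by (simp add: Least_le)
  have "p dvd 2 ^ n - 1" using p(2) dvd by (rule dvd_trans)
  then have cong_n: "[2 ^ n = 1] (mod p)" using cong_altdef_nat[of 1 "2 ^ n"] by simp
  have "\<not> p dvd 2"
  proof
    assume "p dvd 2"
    then have "p = 2" using p(1) dvd_imp_le[of p 2] prime_gt_1_nat[of p] by auto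
    moreover have "odd (2 ^ n - 1 :: nat)" using assms by simp
    ultimately show False using \<open>p dvd 2 ^ n - 1\<close> by simp
  qed
  with p(1) have cong_p: "[2 ^ (p - 1) = 1] (mod p)" by (rule fermat_theorem)
  define d where "d = ord p 2"
  have "d dvd n" "d dvd p - 1" using cong_n cong_p ord_divides by (simp_all add: d_def)
  moreover have "d \<noteq> 1"
  proof
    assume "d = 1"
    then have "[2 ^ 1 = 1] (mod p)" using ord_divides[of 2 1 p] by (simp add: d_def)
    then show False using p(1) cong_altdef_nat[of 1 2 p] by simp
  qed
  ultimately obtain q where q: "prime q" "q dvd d" using prime_factor_nat[of d] by blast
  then have "p \<le> q" using p_least \<open>d dvd n\<close> dvd_trans by blast
  moreover have "d \<noteq> 0" using \<open>d dvd n\<close> assms by (rule_tac ccontr) simp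
  then have "q \<le> d" using q(2) by (simp add: dvd_imp_le)
  moreover have "d \<le> p - 1" using \<open>d dvd p - 1\<close> prime_gt_1_nat[OF p(1)] by (simp add: dvd_imp_le)
  ultimately show False using prime_gt_1_nat[OF p(1)] by linarith
qed

context group
begin

lemma conj_eq_one_iff:
  assumes "g \<in> carrier G" "w \<in> carrier G"
  shows "g \<otimes> w \<otimes> inv g = \<one> \<longleftrightarrow> w = \<one>"
proof -
  have "g \<otimes> w \<otimes> inv g = \<one> \<longleftrightarrow> g \<otimes> w = g"
    using assms inv_solve_right'[of \<one> "g \<otimes> w" g] by auto
  then show ?thesis using assms by simp
qed

lemma ord_conj:
  assumes "g \<in> carrier G" "w \<in> carrier G"
  shows "ord (g \<otimes> w \<otimes> inv g) = ord w"
proof -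
  have "(g \<otimes> w \<otimes> inv g) [^] n = \<one> \<longleftrightarrow> ord w dvd n" for n :: nat
    using assms by (simp add: conj_nat_pow conj_eq_one_iff pow_eq_id)
  then show ?thesis using assms by (simp add: ord_unique)
qed

lemma conj_pow_of_conj_square:
  assumes x: "x \<in> carrier G" and y: "y \<in> carrier G" and xy: "x \<otimes> y \<otimes> inv x = y [^] (2::nat)"
  shows "x [^] m \<otimes> y \<otimes> inv (x [^] m) = y [^] ((2::nat) ^ m)"
proof (induction m)
  case 0 then show ?case using y by simp
next
  case (Suc m)
  have "inv (x \<otimes> x [^] m) = inv (x [^] m) \<otimes> inv x" using x by (simp add: inv_mult_group)
  then have "x [^] Suc m \<otimes> y \<otimes> inv (x [^] Suc m) = x \<otimes> x [^] m \<otimes> y \<otimes> (inv (x [^] m) \<otimes> inv x)"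
    by (simp only: nat_pow_Suc2[OF x])
  also have "\<dots> = x \<otimes> (x [^] m \<otimes> y \<otimes> inv (x [^] m)) \<otimes> inv x"
    using x y by (simp add: m_assoc)
  also have "\<dots> = (x \<otimes> y \<otimes> inv x) [^] ((2::nat) ^ m)"
    using Suc conj_nat_pow[OF x y] by simp
  also have "\<dots> = y [^] ((2::nat) ^ Suc m)"
    using y xy by (simp add: nat_pow_pow)
  finally show ?case .
qed

text \<open>If \<open>x\<close> conjugates \<open>y\<close> to \<open>y\<^sup>2\<close> and \<open>y\<close> is conjugate to \<open>x\<close>, then \<open>y\<close> and \<open>x\<close> have the same
  order \<open>n\<close>, so \<open>y = x\<^sup>n y x\<^sup>-\<^sup>n = y\<^bsup>2\<^sup>n\<^esup>\<close> and \<open>n\<close> divides \<open>2\<^sup>n - 1\<close>.\<close>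

lemma ord_eq_0_if_conj_square:
  assumes x: "x \<in> carrier G" and y: "y \<in> carrier G" and z: "z \<in> carrier G"
    and square: "x \<otimes> y = y \<otimes> y \<otimes> x" and conj: "y \<otimes> z = z \<otimes> x" and y1: "y \<noteq> \<one>"
  shows "ord y = 0"
proof (rule ccontr)
  define n where "n = ord y"
  assume "ord y \<noteq> 0"
  moreover have "ord y \<noteq> 1" using y1 ord_eq_1[OF y] by simp
  ultimately have n: "1 < n" by (simp add: n_def)
  have "y = z \<otimes> x \<otimes> inv z" using conj x y z inv_solve_right[of y "z \<otimes> x" z] by simp
  then have "ord x = n" using ord_conj[OF z x] by (simp add: n_def)
  then have "x [^] n = \<one>" using pow_ord_eq_1[OF x] by simp
  moreover have "x \<otimes> y \<otimes> inv x = y [^] (2::nat)"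
    using square x y inv_solve_right[of "y [^] (2::nat)" "x \<otimes> y" x] by (simp add: numeral_2_eq_2)
  ultimately have "y = y [^] ((2::nat) ^ n)" using conj_pow_of_conj_square[OF x y, of n] y by simp
  also have "\<dots> = y [^] Suc ((2::nat) ^ n - 1)" by simp
  also have "\<dots> = y [^] ((2::nat) ^ n - 1) \<otimes> y" by (rule nat_pow_Suc)
  finally have "y [^] ((2::nat) ^ n - 1) = \<one>" using y by simp
  then have "n dvd 2 ^ n - 1" using pow_eq_id[OF y] by (simp add: n_def)
  then show False using not_dvd_two_pow_minus_one[OF n] by contradiction
qed

end

section \<open>Countable groups witnessing the generic properties\<close>

lemma conjugable_scaling_translation:
  assumes H: "group H" "infinite (carrier H)"
  shows "conjugable (H \<times>\<times> rot_trans_group 0) (\<one>\<^bsub>H\<^esub>, (2, 0)) (\<one>\<^bsub>H\<^esub>, (1, 1))"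
proof -
  interpret H: group H by (rule H(1))
  interpret K: group "rot_trans_group 0" by (rule group_rot_trans_group)
  have gens: "(2, 0) \<in> carrier (rot_trans_group 0)" "(1, 1) \<in> carrier (rot_trans_group 0)"
    using rot_trans_group_gens[of 0] by (simp_all add: root_of_order_def)
  moreover have "K.ord (2, 0) = 0" "K.ord (1, 1) = 0"
    using ord_rot_trans_group_rotation[of 0] ord_rot_trans_group_translation[OF gens(2)]
    by (simp_all add: root_of_order_def)
  ultimately show ?thesis
    unfolding conjugable_def using H(2) DirProd_ord[OF H.is_group K.is_group]
      infinite_rcosets_DirProd_left[OF H.is_group K.is_group H.one_closed]
    by simp
qed

lemma conjugable_rotation_pairs:
  assumes H: "group H" "infinite (carrier H)" and a: "a \<in> carrier H" "a \<noteq> \<one>\<^bsub>H\<^esub>"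
    and b: "b \<in> carrier H"
  defines "K \<equiv> rot_trans_group (group.ord H a)"
  defines "\<rho> \<equiv> (root_of_order (group.ord H a), 0)"
  defines "c \<equiv> commutator K \<rho> (1, 1)"
  shows "conjugable (H \<times>\<times> K) (a, \<one>\<^bsub>K\<^esub>) (\<one>\<^bsub>H\<^esub>, \<rho>)" and "conjugable (H \<times>\<times> K) (\<one>\<^bsub>H\<^esub>, c) (b, c)"
proof -
  interpret H: group H by (rule H(1))
  interpret K: group K unfolding K_def by (rule group_rot_trans_group)
  have "root_of_order (H.ord a) \<noteq> 1"
    using root_of_order_pow_eq_1[of "H.ord a" 1] H.ord_eq_1[OF a(1)] a(2) by auto
  have \<rho>K: "\<rho> \<in> carrier K" and "(1, 1) \<in> carrier K"
    using rot_trans_group_gens by (simp_all add: K_def \<rho>_def)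
  then have cK: "c \<in> carrier K" unfolding c_def commutator_def by (intro K.m_closed K.inv_closed)
  have "c = (1, root_of_order (H.ord a) - 1)"
    using commutator_rotation_translation by (simp add: c_def K_def \<rho>_def)
  then have ordK: "K.ord \<rho> = H.ord a" "K.ord c = 0"
    using ord_rot_trans_group_rotation ord_rot_trans_group_translation cK
      \<open>root_of_order (H.ord a) \<noteq> 1\<close>
    by (simp_all add: K_def \<rho>_def)
  have "infinite (carrier K)" using infinite_rot_trans_group by (simp add: K_def)
  note ord = DirProd_ord[OF H.is_group K.is_group]
  note rcosets_left = infinite_rcosets_DirProd_left[OF H.is_group K.is_group]
  show "conjugable (H \<times>\<times> K) (a, \<one>\<^bsub>K\<^esub>) (\<one>\<^bsub>H\<^esub>, \<rho>)"
    unfolding conjugable_def using a(1) \<rho>K ordK H(2) \<open>infinite (carrier K)\<close> ord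
      infinite_rcosets_DirProd_right[OF H.is_group K.is_group a(1) K.one_closed]
      rcosets_left[OF H.one_closed \<rho>K]
    by simp
  show "conjugable (H \<times>\<times> K) (\<one>\<^bsub>H\<^esub>, c) (b, c)"
    unfolding conjugable_def using b cK ordK H(2) ord rcosets_left[OF H.one_closed cK] rcosets_left[OF b cK]
    by simp
qed

lemma tbl_grp_embedding_conjugating:
  fixes K :: "('k, 'x) monoid_scheme"
  assumes AG: "A \<in> group_tables" and K: "group K" "countable (carrier K)"
    and Prs: "countable Prs" "\<And>u v. (u, v) \<in> Prs \<Longrightarrow> conjugable (tbl_grp A \<times>\<times> K) u v"
  obtains Q :: "(nat \<times> 'k \<Rightarrow> nat \<times> 'k) monoid" and \<Lambda> where "group Q" "countable (carrier Q)"
    "\<Lambda> \<in> hom (tbl_grp A \<times>\<times> K) Q" "inj_on \<Lambda> (carrier (tbl_grp A \<times>\<times> K))"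
    "\<And>u v. (u, v) \<in> Prs \<Longrightarrow> \<exists>g\<in>carrier Q. g \<otimes>\<^bsub>Q\<^esub> \<Lambda> u \<otimes>\<^bsub>Q\<^esub> inv\<^bsub>Q\<^esub> g = \<Lambda> v"
    "(\<lambda>n. \<Lambda> (n, \<one>\<^bsub>K\<^esub>)) \<in> hom (tbl_grp A) Q" "inj_on (\<lambda>n. \<Lambda> (n, \<one>\<^bsub>K\<^esub>)) Npos"
proof -
  have H: "group (tbl_grp A)" by (rule group_tbl_grp[OF AG])
  obtain Q :: "(nat \<times> 'k \<Rightarrow> nat \<times> 'k) monoid" and \<Lambda> where Q: "group Q" "countable (carrier Q)"
    and \<Lambda>: "\<Lambda> \<in> hom (tbl_grp A \<times>\<times> K) Q" "inj_on \<Lambda> (carrier (tbl_grp A \<times>\<times> K))"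
    and conj: "\<And>u v. (u, v) \<in> Prs \<Longrightarrow> \<exists>g\<in>carrier Q. g \<otimes>\<^bsub>Q\<^esub> \<Lambda> u \<otimes>\<^bsub>Q\<^esub> inv\<^bsub>Q\<^esub> g = \<Lambda> v"
  proof (rule embedding_conjugating_pairs[OF DirProd_group[OF H K(1)]])
    show "countable (carrier (tbl_grp A \<times>\<times> K))" using K(2) by simp
    show "countable Prs" by (rule Prs(1))
    show "\<And>u v. (u, v) \<in> Prs \<Longrightarrow> conjugable (tbl_grp A \<times>\<times> K) u v" by (rule Prs(2))
  qed (rule that)
  moreover have "(\<lambda>n. \<Lambda> (n, \<one>\<^bsub>K\<^esub>)) \<in> hom (tbl_grp A) Q" "inj_on (\<lambda>n. \<Lambda> (n, \<one>\<^bsub>K\<^esub>)) Npos"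
    using DirProd_left_embedding[OF H K(1) \<Lambda>] by simp_all
  ultimately show ?thesis using that by blast
qed

text \<open>The map \<open>z \<mapsto> 2 z\<close> conjugates \<open>z \<mapsto> z + 1\<close> to its square. In the product of the group of \<open>A\<close>
  with the group these two maps generate, they commute with the first factor; making them
  conjugate yields the relations of \<open>ord_eq_0_if_conj_square\<close>.\<close>

lemma embedding_with_conj_square:
  assumes AG: "A \<in> group_tables"
  obtains Q :: "(nat \<times> complex \<times> complex \<Rightarrow> nat \<times> complex \<times> complex) monoid" and j x y z
  where "group Q" "countable (carrier Q)" "j \<in> hom (tbl_grp A) Q" "inj_on j Npos"
    "x \<in> carrier Q" "y \<in> carrier Q" "z \<in> carrier Q"
    "x \<otimes>\<^bsub>Q\<^esub> y = y \<otimes>\<^bsub>Q\<^esub> y \<otimes>\<^bsub>Q\<^esub> x" "y \<otimes>\<^bsub>Q\<^esub> z = z \<otimes>\<^bsub>Q\<^esub> x" "y \<noteq> \<one>\<^bsub>Q\<^esub>"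
    "\<And>n. n \<in> Npos \<Longrightarrow> x \<otimes>\<^bsub>Q\<^esub> j n = j n \<otimes>\<^bsub>Q\<^esub> x" "x \<otimes>\<^bsub>Q\<^esub> y \<noteq> y \<otimes>\<^bsub>Q\<^esub> x"
proof -
  define H where "H = tbl_grp A"
  define K where "K = rot_trans_group 0"
  define P where "P = H \<times>\<times> K"
  interpret H: group H unfolding H_def by (rule group_tbl_grp[OF AG])
  interpret K: group K unfolding K_def by (rule group_rot_trans_group)
  interpret P: group P unfolding P_def by (rule DirProd_group) unfold_locales
  have gens: "(2, 0) \<in> carrier K" "(1, 1) \<in> carrier K"
    using rot_trans_group_gens[of 0] by (simp_all add: K_def root_of_order_def)
  define u where "u = (\<one>\<^bsub>H\<^esub>, (2::complex, 0::complex))"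
  define v where "v = (\<one>\<^bsub>H\<^esub>, (1::complex, 1::complex))"
  have uv: "u \<in> carrier P" "v \<in> carrier P" using gens by (simp_all add: u_def v_def P_def)
  have uv_conj: "conjugable P u v"
    using conjugable_scaling_translation[OF H.is_group] infinite_Npos by (simp add: u_def v_def P_def K_def H_def)
  obtain Q :: "(nat \<times> complex \<times> complex \<Rightarrow> nat \<times> complex \<times> complex) monoid" and \<Lambda>
    where Q: "group Q" "countable (carrier Q)" and \<Lambda>: "\<Lambda> \<in> hom P Q" "inj_on \<Lambda> (carrier P)"
      and conj: "\<And>u' v'. (u', v') \<in> {(u, v)} \<Longrightarrow> \<exists>g\<in>carrier Q. g \<otimes>\<^bsub>Q\<^esub> \<Lambda> u' \<otimes>\<^bsub>Q\<^esub> inv\<^bsub>Q\<^esub> g = \<Lambda> v'"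
      and j: "(\<lambda>n. \<Lambda> (n, \<one>\<^bsub>K\<^esub>)) \<in> hom H Q" "inj_on (\<lambda>n. \<Lambda> (n, \<one>\<^bsub>K\<^esub>)) Npos"
  proof (rule tbl_grp_embedding_conjugating[OF AG K.is_group, folded H_def, folded P_def])
    show "countable (carrier K)" "countable {(u, v)}" using countable_rot_trans_group by (simp_all add: K_def)
    fix u' v' assume "(u', v') \<in> {(u, v)}"
    then show "conjugable P u' v'" using uv_conj by simp
  qed (rule that)
  interpret Q: group Q by (rule Q(1))
  interpret \<Lambda>: group_hom P Q \<Lambda> using \<Lambda>(1) by unfold_locales
  obtain g where g: "g \<in> carrier Q" "g \<otimes>\<^bsub>Q\<^esub> \<Lambda> u \<otimes>\<^bsub>Q\<^esub> inv\<^bsub>Q\<^esub> g = \<Lambda> v" using conj[of u v] by blast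
  have "\<Lambda> v \<otimes>\<^bsub>Q\<^esub> g = g \<otimes>\<^bsub>Q\<^esub> \<Lambda> u"
    using g uv by (metis Q.inv_solve_right Q.m_closed \<Lambda>.hom_closed)
  moreover have "u \<otimes>\<^bsub>P\<^esub> v = v \<otimes>\<^bsub>P\<^esub> v \<otimes>\<^bsub>P\<^esub> u" "u \<otimes>\<^bsub>P\<^esub> v \<noteq> v \<otimes>\<^bsub>P\<^esub> u"
    by (simp_all add: u_def v_def P_def K_def)
  then have "\<Lambda> u \<otimes>\<^bsub>Q\<^esub> \<Lambda> v = \<Lambda> v \<otimes>\<^bsub>Q\<^esub> \<Lambda> v \<otimes>\<^bsub>Q\<^esub> \<Lambda> u" "\<Lambda> u \<otimes>\<^bsub>Q\<^esub> \<Lambda> v \<noteq> \<Lambda> v \<otimes>\<^bsub>Q\<^esub> \<Lambda> u"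
    using uv \<Lambda>(2) by (simp_all add: inj_on_eq_iff flip: \<Lambda>.hom_mult)
  moreover have "\<Lambda> v \<noteq> \<one>\<^bsub>Q\<^esub>"
  proof -
    have "v \<noteq> \<one>\<^bsub>P\<^esub>" by (simp add: v_def P_def K_def)
    then show ?thesis using inj_onD[OF \<Lambda>(2), of v "\<one>\<^bsub>P\<^esub>"] uv by auto
  qed
  moreover have "\<Lambda> u \<otimes>\<^bsub>Q\<^esub> \<Lambda> (n, \<one>\<^bsub>K\<^esub>) = \<Lambda> (n, \<one>\<^bsub>K\<^esub>) \<otimes>\<^bsub>Q\<^esub> \<Lambda> u" if "n \<in> Npos" for n
  proof -
    have n: "n \<in> carrier H" using that by (simp add: H_def)
    then have "u \<otimes>\<^bsub>P\<^esub> (n, \<one>\<^bsub>K\<^esub>) = (n, \<one>\<^bsub>K\<^esub>) \<otimes>\<^bsub>P\<^esub> u"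
      by (simp add: u_def P_def K_def)
    then show ?thesis using n uv by (simp add: P_def flip: \<Lambda>.hom_mult)
  qed
  ultimately show ?thesis
    using Q j g(1) uv
    by (intro that[of Q "\<lambda>n. \<Lambda> (n, \<one>\<^bsub>K\<^esub>)" "\<Lambda> u" "\<Lambda> v" g]) (assumption | simp add: H_def)+
qed

text \<open>Make \<open>a \<noteq> 1\<close>, of order \<open>k\<close>, conjugate to a rotation \<open>\<rho>\<close> of order \<open>k\<close>. The commutator of \<open>\<rho>\<close> with a
  translation is a translation \<open>c \<noteq> 1\<close>, of infinite order like \<open>b c\<close>; once \<open>c\<close> and \<open>b c\<close> are made
  conjugate, \<open>b = (b c) c\<^sup>-\<^sup>1\<close> is a commutator with \<open>c\<close>.\<close>

lemma embedding_with_commutator_witness: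
  assumes AG: "A \<in> group_tables" and a: "a \<in> Npos" "a \<noteq> 1" and b: "b \<in> Npos"
  obtains Q :: "(nat \<times> complex \<times> complex \<Rightarrow> nat \<times> complex \<times> complex) monoid" and j g0 g1 t
  where "group Q" "countable (carrier Q)" "j \<in> hom (tbl_grp A) Q" "inj_on j Npos"
    "g0 \<in> carrier Q" "g1 \<in> carrier Q" "t \<in> carrier Q"
    "j b = commutator Q g1 (commutator Q (g0 \<otimes>\<^bsub>Q\<^esub> j a \<otimes>\<^bsub>Q\<^esub> inv\<^bsub>Q\<^esub> g0) t)"
proof -
  define H where "H = tbl_grp A"
  interpret H: group H unfolding H_def by (rule group_tbl_grp[OF AG])
  define K where "K = rot_trans_group (H.ord a)"
  define P where "P = H \<times>\<times> K"
  interpret K: group K unfolding K_def by (rule group_rot_trans_group)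
  interpret P: group P unfolding P_def by (rule DirProd_group) unfold_locales
  define \<rho> where "\<rho> = (root_of_order (H.ord a), 0::complex)"
  define T where "T = (1::complex, 1::complex)"
  define c where "c = commutator K \<rho> T"
  have \<rho>T: "\<rho> \<in> carrier K" "T \<in> carrier K" using rot_trans_group_gens by (simp_all add: K_def \<rho>_def T_def)
  have cK: "c \<in> carrier K" using \<rho>T by (simp add: c_def commutator_def)
  define u1 where "u1 = (a, \<one>\<^bsub>K\<^esub>)"
  define v1 where "v1 = (\<one>\<^bsub>H\<^esub>, \<rho>)"
  define u2 where "u2 = (\<one>\<^bsub>H\<^esub>, c)"
  define v2 where "v2 = (b, c)"
  have aH: "a \<in> carrier H" and bH: "b \<in> carrier H" using a b by (simp_all add: H_def)
  have inP: "u1 \<in> carrier P" "v1 \<in> carrier P" "u2 \<in> carrier P" "v2 \<in> carrier P"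
    using aH bH \<rho>T cK by (simp_all add: u1_def v1_def u2_def v2_def P_def)
  have pairs_conj: "conjugable P u1 v1" "conjugable P u2 v2"
    using conjugable_rotation_pairs[OF H.is_group _ aH _ bH] infinite_Npos a(2)
    by (simp_all add: P_def K_def u1_def v1_def u2_def v2_def \<rho>_def c_def T_def H_def)
  obtain Q :: "(nat \<times> complex \<times> complex \<Rightarrow> nat \<times> complex \<times> complex) monoid" and \<Lambda>
    where Q: "group Q" "countable (carrier Q)" and \<Lambda>: "\<Lambda> \<in> hom P Q" "inj_on \<Lambda> (carrier P)"
      and conj: "\<And>u v. (u, v) \<in> {(u1, v1), (u2, v2)} \<Longrightarrow>
        \<exists>g\<in>carrier Q. g \<otimes>\<^bsub>Q\<^esub> \<Lambda> u \<otimes>\<^bsub>Q\<^esub> inv\<^bsub>Q\<^esub> g = \<Lambda> v"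
      and j: "(\<lambda>n. \<Lambda> (n, \<one>\<^bsub>K\<^esub>)) \<in> hom H Q" "inj_on (\<lambda>n. \<Lambda> (n, \<one>\<^bsub>K\<^esub>)) Npos"
  proof (rule tbl_grp_embedding_conjugating[OF AG K.is_group, folded H_def, folded P_def])
    show "countable (carrier K)" "countable {(u1, v1), (u2, v2)}"
      using countable_rot_trans_group by (simp_all add: K_def)
    fix u v assume "(u, v) \<in> {(u1, v1), (u2, v2)}"
    then show "conjugable P u v" using pairs_conj by auto
  qed (rule that)
  interpret Q: group Q by (rule Q(1))
  interpret \<Lambda>: group_hom P Q \<Lambda> using \<Lambda>(1) by unfold_locales
  obtain g0 where g0: "g0 \<in> carrier Q" "g0 \<otimes>\<^bsub>Q\<^esub> \<Lambda> u1 \<otimes>\<^bsub>Q\<^esub> inv\<^bsub>Q\<^esub> g0 = \<Lambda> v1"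
    using conj[of u1 v1] by blast
  obtain g1 where g1: "g1 \<in> carrier Q" "g1 \<otimes>\<^bsub>Q\<^esub> \<Lambda> u2 \<otimes>\<^bsub>Q\<^esub> inv\<^bsub>Q\<^esub> g1 = \<Lambda> v2"
    using conj[of u2 v2] by blast
  define j where "j = (\<lambda>n. \<Lambda> (n, \<one>\<^bsub>K\<^esub>))"
  define t where "t = \<Lambda> (\<one>\<^bsub>H\<^esub>, T)"
  have tP: "(\<one>\<^bsub>H\<^esub>, T) \<in> carrier P" using \<rho>T by (simp add: P_def)
  have "commutator Q (g0 \<otimes>\<^bsub>Q\<^esub> j a \<otimes>\<^bsub>Q\<^esub> inv\<^bsub>Q\<^esub> g0) t = \<Lambda> (commutator P v1 (\<one>\<^bsub>H\<^esub>, T))"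
    using g0 inP tP by (simp add: j_def t_def u1_def \<Lambda>.hom_commutator)
  also have "commutator P v1 (\<one>\<^bsub>H\<^esub>, T) = u2"
    using \<rho>T commutator_DirProd[OF H.is_group K.is_group] by (simp add: P_def v1_def u2_def c_def commutator_def)
  finally have "commutator Q g1 (commutator Q (g0 \<otimes>\<^bsub>Q\<^esub> j a \<otimes>\<^bsub>Q\<^esub> inv\<^bsub>Q\<^esub> g0) t) = \<Lambda> v2 \<otimes>\<^bsub>Q\<^esub> inv\<^bsub>Q\<^esub> \<Lambda> u2"
    using g1 inP by (simp add: commutator_def)
  also have "\<dots> = \<Lambda> (v2 \<otimes>\<^bsub>P\<^esub> inv\<^bsub>P\<^esub> u2)" using inP by simp
  also have "v2 \<otimes>\<^bsub>P\<^esub> inv\<^bsub>P\<^esub> u2 = (b, \<one>\<^bsub>K\<^esub>)"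
    using bH cK by (simp add: P_def u2_def v2_def inv_DirProd[OF H.is_group K.is_group])
  finally show ?thesis
    using Q j g0(1) g1(1) tP by (intro that[of Q j g0 g1 t]) (simp_all add: j_def t_def H_def)
qed

section \<open>The three nowhere dense families\<close>

lemma nowhere_dense_generated_by:
  assumes S: "finite S" "S \<subseteq> Npos"
  shows "nowhere_dense_in G_space {A \<in> group_tables. generate (tbl_grp A) S = Npos}"
    (is "nowhere_dense_in _ ?T")
proof (rule nowhere_dense_in_G_spaceI)
  fix A D assume AG: "A \<in> group_tables" and D: "finite (D :: (nat \<times> nat) set)"
  obtain Q :: "(nat \<times> complex \<times> complex \<Rightarrow> nat \<times> complex \<times> complex) monoid" and j x y
    where Q: "group Q" "countable (carrier Q)" and j: "j \<in> hom (tbl_grp A) Q" "inj_on j Npos"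
      and xy: "x \<in> carrier Q" "y \<in> carrier Q" and comm: "\<And>n. n \<in> Npos \<Longrightarrow> x \<otimes>\<^bsub>Q\<^esub> j n = j n \<otimes>\<^bsub>Q\<^esub> x"
      and ncomm: "x \<otimes>\<^bsub>Q\<^esub> y \<noteq> y \<otimes>\<^bsub>Q\<^esub> x"
    by (rule embedding_with_conj_square[OF AG]) (rule that)
  interpret Q: group Q by (rule Q(1))
  have jS: "j s \<in> carrier Q" if "s \<in> S" for s using j(1) S(2) that by (auto simp: hom_def)
  let ?W = "(\<lambda>s. (x, j s)) ` S \<union> (\<lambda>s. (j s, x)) ` S \<union> {(x, y), (y, x)}"
  show "avoidable_near ?T A D"
  proof (rule avoidable_near_by_embedding[OF AG D Q j S, of ?W])
    show "finite ?W" using S(1) by simp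
    show "?W \<subseteq> carrier Q \<times> carrier Q" using xy jS by auto
  next
    fix C l assume C: "C \<in> group_tables" and l: "bij_betw l (carrier Q) Npos"
      and lj: "\<And>n. n \<in> S \<Longrightarrow> l (j n) = n" and prod: "\<And>p q. (p, q) \<in> ?W \<Longrightarrow> C (l p, l q) = l (p \<otimes>\<^bsub>Q\<^esub> q)"
    interpret G: group "tbl_grp C" using C by (rule group_tbl_grp)
    have lx: "l x \<in> Npos" and ly: "l y \<in> Npos" using l xy by (auto simp: bij_betw_def)
    define Z where "Z = {g \<in> carrier (tbl_grp C). l x \<otimes>\<^bsub>tbl_grp C\<^esub> g = g \<otimes>\<^bsub>tbl_grp C\<^esub> l x}"
    have "C (l x, s) = C (s, l x)" if s: "s \<in> S" for s
    proof -
      have "C (l x, s) = l (x \<otimes>\<^bsub>Q\<^esub> j s)" using prod[of x "j s"] lj[OF s] s by simp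
      also have "\<dots> = l (j s \<otimes>\<^bsub>Q\<^esub> x)" using comm[of s] s S(2) by auto
      also have "\<dots> = C (s, l x)" using prod[of "j s" x] lj[OF s] s by simp
      finally show ?thesis .
    qed
    then have "S \<subseteq> Z" using S(2) by (auto simp: Z_def)
    then have "generate (tbl_grp C) S \<subseteq> Z"
      using G.subgroup_centralizer lx unfolding Z_def by (intro G.generate_subgroup_incl) simp_all
    moreover have "C (l x, l y) \<noteq> C (l y, l x)"
      using prod[of x y] prod[of y x] ncomm inj_on_eq_iff[OF bij_betw_imp_inj_on[OF l]] xy by simp
    then have "l y \<notin> Z" by (simp add: Z_def)
    ultimately show "C \<notin> ?T" using ly by blast
  qed
qed blast

lemma nowhere_dense_locally_finite:
  "nowhere_dense_in G_space {A \<in> group_tables. locally_finite_grp (tbl_grp A)}"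
  (is "nowhere_dense_in _ ?T")
proof (rule nowhere_dense_in_G_spaceI)
  fix A D assume AG: "A \<in> group_tables" and D: "finite (D :: (nat \<times> nat) set)"
  obtain Q :: "(nat \<times> complex \<times> complex \<Rightarrow> nat \<times> complex \<times> complex) monoid" and j x y z
    where Q: "group Q" "countable (carrier Q)" and j: "j \<in> hom (tbl_grp A) Q" "inj_on j Npos"
      and xyz: "x \<in> carrier Q" "y \<in> carrier Q" "z \<in> carrier Q"
      and rel: "x \<otimes>\<^bsub>Q\<^esub> y = y \<otimes>\<^bsub>Q\<^esub> y \<otimes>\<^bsub>Q\<^esub> x" "y \<otimes>\<^bsub>Q\<^esub> z = z \<otimes>\<^bsub>Q\<^esub> x" "y \<noteq> \<one>\<^bsub>Q\<^esub>"
    by (rule embedding_with_conj_square[OF AG]) (rule that)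
  interpret Q: group Q by (rule Q(1))
  let ?W = "{(x, y), (y, y), (y \<otimes>\<^bsub>Q\<^esub> y, x), (y, z), (z, x)}"
  show "avoidable_near ?T A D"
  proof (rule avoidable_near_by_embedding[OF AG D Q j, of "{}" ?W])
    show "?W \<subseteq> carrier Q \<times> carrier Q" using xyz by auto
  next
    fix C l assume C: "C \<in> group_tables" and l: "bij_betw l (carrier Q) Npos" "l \<one>\<^bsub>Q\<^esub> = 1"
      and prod: "\<And>p q. (p, q) \<in> ?W \<Longrightarrow> C (l p, l q) = l (p \<otimes>\<^bsub>Q\<^esub> q)"
    interpret G: group "tbl_grp C" using C by (rule group_tbl_grp)
    have l_inj: "inj_on l (carrier Q)" and lQ: "\<And>q. q \<in> carrier Q \<Longrightarrow> l q \<in> Npos"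
      using l(1) by (auto simp: bij_betw_def)
    have "C (l x, l y) = C (C (l y, l y), l x)"
      using prod[of x y] prod[of y y] prod[of "y \<otimes>\<^bsub>Q\<^esub> y" x] rel(1) by simp
    moreover have "C (l y, l z) = C (l z, l x)"
      using prod[of y z] prod[of z x] rel(2) by simp
    moreover have "l y \<noteq> l \<one>\<^bsub>Q\<^esub>" using rel(3) inj_on_eq_iff[OF l_inj xyz(2) Q.one_closed] by simp
    then have "l y \<noteq> 1" using l(2) by simp
    ultimately have "G.ord (l y) = 0"
      using xyz lQ by (intro G.ord_eq_0_if_conj_square[of "l x" "l y" "l z"]) simp_all
    then have "infinite (generate (tbl_grp C) {l y})"
      using G.infinite_cyclic_subgroup_order[of "l y"] xyz(2) lQ
      by (simp add: carrier_subgroup_generated)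
    then show "C \<notin> ?T" using xyz(2) lQ by (auto simp: locally_finite_grp_def)
  qed simp_all
qed blast

lemma nowhere_dense_normal_separating:
  assumes a: "a \<in> Npos" "a \<noteq> 1" and b: "b \<in> Npos"
  shows "nowhere_dense_in G_space {A \<in> group_tables. \<exists>N. N \<lhd> tbl_grp A \<and> a \<in> N \<and> b \<notin> N}"
  (is "nowhere_dense_in _ ?T")
proof (rule nowhere_dense_in_G_spaceI)
  fix A D assume AG: "A \<in> group_tables" and D: "finite (D :: (nat \<times> nat) set)"
  obtain Q :: "(nat \<times> complex \<times> complex \<Rightarrow> nat \<times> complex \<times> complex) monoid" and j g0 g1 t
    where Q: "group Q" "countable (carrier Q)" and j: "j \<in> hom (tbl_grp A) Q" "inj_on j Npos"
      and g: "g0 \<in> carrier Q" "g1 \<in> carrier Q" "t \<in> carrier Q"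
      and jb: "j b = commutator Q g1 (commutator Q (g0 \<otimes>\<^bsub>Q\<^esub> j a \<otimes>\<^bsub>Q\<^esub> inv\<^bsub>Q\<^esub> g0) t)"
    by (rule embedding_with_commutator_witness[OF AG a b]) (rule that)
  interpret Q: group Q by (rule Q(1))
  have ja: "j a \<in> carrier Q" using j(1) a by (auto simp: hom_def)
  define x1 where "x1 = g0 \<otimes>\<^bsub>Q\<^esub> j a \<otimes>\<^bsub>Q\<^esub> inv\<^bsub>Q\<^esub> g0"
  define x2 where "x2 = commutator Q x1 t"
  have x: "x1 \<in> carrier Q" "x2 \<in> carrier Q" using g ja by (simp_all add: x1_def x2_def commutator_def)
  let ?W = "conj_pairs Q g0 (j a) \<union> commutator_pairs Q x1 t \<union> commutator_pairs Q g1 x2"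
  show "avoidable_near ?T A D"
  proof (rule avoidable_near_by_embedding[OF AG D Q j, of "{a, b}" ?W])
    show "?W \<subseteq> carrier Q \<times> carrier Q"
      using g ja x by (auto simp: conj_pairs_def commutator_pairs_def)
  next
    fix C l assume C: "C \<in> group_tables" and l: "bij_betw l (carrier Q) Npos" "l \<one>\<^bsub>Q\<^esub> = 1"
      and lj: "\<And>n. n \<in> {a, b} \<Longrightarrow> l (j n) = n"
      and prod: "\<And>p q. (p, q) \<in> ?W \<Longrightarrow> C (l p, l q) = l (p \<otimes>\<^bsub>Q\<^esub> q)"
    interpret G: group "tbl_grp C" using C by (rule group_tbl_grp)
    have lQ: "\<And>q. q \<in> carrier Q \<Longrightarrow> l q \<in> Npos" using l(1) by (auto simp: bij_betw_def)
    have prod1: "\<And>p q. (p, q) \<in> conj_pairs Q g0 (j a) \<Longrightarrow> C (l p, l q) = l (p \<otimes>\<^bsub>Q\<^esub> q)"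
      and prod2: "\<And>p q. (p, q) \<in> commutator_pairs Q x1 t \<Longrightarrow> C (l p, l q) = l (p \<otimes>\<^bsub>Q\<^esub> q)"
      and prod3: "\<And>p q. (p, q) \<in> commutator_pairs Q g1 x2 \<Longrightarrow> C (l p, l q) = l (p \<otimes>\<^bsub>Q\<^esub> q)"
      using prod by blast+
    have lx1: "l x1 = l g0 \<otimes>\<^bsub>tbl_grp C\<^esub> l (j a) \<otimes>\<^bsub>tbl_grp C\<^esub> inv\<^bsub>tbl_grp C\<^esub> (l g0)"
      unfolding x1_def by (rule table_conj_eq[of C Q l, OF C Q(1) lQ l(2) g(1) ja prod1])
    have lx2: "l x2 = commutator (tbl_grp C) (l x1) (l t)"
      unfolding x2_def by (rule table_commutator_eq[of C Q l, OF C Q(1) lQ l(2) x(1) g(3) prod2])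
    have "l (commutator Q g1 x2) = commutator (tbl_grp C) (l g1) (l x2)"
      by (rule table_commutator_eq[of C Q l, OF C Q(1) lQ l(2) g(2) x(2) prod3])
    then have lb: "b = commutator (tbl_grp C) (l g1) (l x2)"
      using lj[of b] jb by (simp add: x1_def x2_def)
    show "C \<notin> ?T"
    proof
      assume "C \<in> ?T"
      then obtain N where N: "N \<lhd> tbl_grp C" "a \<in> N" "b \<notin> N" by blast
      interpret N: normal N "tbl_grp C" by (rule N(1))
      have "l x1 \<in> N" using N.inv_op_closed2[of "l g0" a] lQ g(1) N(2) lx1 lj by simp
      then have "l x2 \<in> N" using N.commutator_closed_left[of "l x1" "l t"] lQ g(3) lx2 by simp
      then have "b \<in> N" using N.commutator_closed_right[of "l g1" "l x2"] lQ g(2) lb by simp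
      with N(3) show False by contradiction
    qed
  qed (use a b in \<open>simp_all add: conj_pairs_def commutator_pairs_def\<close>)
qed blast

lemma not_simple_grp_tbl_grpD:
  assumes "\<not> simple_grp (tbl_grp A)"
  obtains a b N where "a \<in> Npos" "a \<noteq> 1" "b \<in> Npos" "N \<lhd> tbl_grp A" "a \<in> N" "b \<notin> N"
proof -
  have "(2::nat) \<in> carrier (tbl_grp A)" "(2::nat) \<noteq> \<one>\<^bsub>tbl_grp A\<^esub>" by (simp_all add: Npos_def)
  then have "carrier (tbl_grp A) \<noteq> {\<one>\<^bsub>tbl_grp A\<^esub>}" by blast
  then obtain N where N: "N \<lhd> tbl_grp A" "N \<noteq> {\<one>\<^bsub>tbl_grp A\<^esub>}" "N \<noteq> carrier (tbl_grp A)"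
    using assms unfolding simple_grp_def by blast
  have N1: "1 \<in> N" and NN: "N \<subseteq> Npos"
    using subgroup.one_closed[OF normal_imp_subgroup[OF N(1)]]
      subgroup.subset[OF normal_imp_subgroup[OF N(1)]] by simp_all
  obtain a where "a \<in> N" "a \<noteq> 1" using N(2) N1 by (auto simp only: tbl_grp_simps)
  moreover obtain b where "b \<in> Npos" "b \<notin> N" using N(3) NN by (auto simp only: tbl_grp_simps)
  ultimately show ?thesis using that N(1) NN by blast
qed

definition obstruction_sets :: "(nat \<times> nat \<Rightarrow> nat) set set" where
  "obstruction_sets =
     (\<lambda>S. {A \<in> group_tables. generate (tbl_grp A) S = Npos}) ` {S. finite S \<and> S \<subseteq> Npos}
     \<union> {{A \<in> group_tables. locally_finite_grp (tbl_grp A)}}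
     \<union> (\<lambda>(a, b). {A \<in> group_tables. \<exists>N. N \<lhd> tbl_grp A \<and> a \<in> N \<and> b \<notin> N}) ` ((Npos - {1}) \<times> Npos)"

lemma countable_obstruction_sets: "countable obstruction_sets"
  unfolding obstruction_sets_def
  by (intro countable_Un countable_image countable_Collect_finite_subset) (auto intro: countable_SIGMA)

lemma nowhere_dense_obstruction_sets: "T \<in> obstruction_sets \<Longrightarrow> nowhere_dense_in G_space T"
  unfolding obstruction_sets_def
  by (auto intro: nowhere_dense_generated_by nowhere_dense_locally_finite nowhere_dense_normal_separating)

lemma obstruction_sets_cover:
  assumes A: "A \<in> group_tables"
    and bad: "\<not> (simple_grp (tbl_grp A) \<and> \<not> finitely_generated_grp (tbl_grp A) \<and>
      \<not> locally_finite_grp (tbl_grp A))"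
  shows "A \<in> \<Union>obstruction_sets"
proof -
  consider "\<not> simple_grp (tbl_grp A)" | "finitely_generated_grp (tbl_grp A)" | "locally_finite_grp (tbl_grp A)"
    using bad by blast
  then show ?thesis
  proof cases
    case 1
    then obtain a b N where ab: "a \<in> Npos" "a \<noteq> 1" "b \<in> Npos" and N: "N \<lhd> tbl_grp A" "a \<in> N" "b \<notin> N"
      by (rule not_simple_grp_tbl_grpD)
    have "{A \<in> group_tables. \<exists>N. N \<lhd> tbl_grp A \<and> a \<in> N \<and> b \<notin> N} \<in> obstruction_sets"
      using ab unfolding obstruction_sets_def by blast
    moreover have "A \<in> {A \<in> group_tables. \<exists>N. N \<lhd> tbl_grp A \<and> a \<in> N \<and> b \<notin> N}" using A N by auto
    ultimately show ?thesis by (rule UnionI)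
  next
    case 2
    then obtain S where S: "finite S" "S \<subseteq> Npos" "generate (tbl_grp A) S = Npos"
      unfolding finitely_generated_grp_def by auto
    have "{A \<in> group_tables. generate (tbl_grp A) S = Npos} \<in> obstruction_sets"
      using S unfolding obstruction_sets_def by blast
    moreover have "A \<in> {A \<in> group_tables. generate (tbl_grp A) S = Npos}" using A S by auto
    ultimately show ?thesis by (rule UnionI)
  next
    case 3
    then show ?thesis using A unfolding obstruction_sets_def by blast
  qed
qed

theorem corollary6p3:
  shows "comeager_in G_space
           {A \<in> group_tables. simple_grp (tbl_grp A) \<and>
              \<not> finitely_generated_grp (tbl_grp A) \<and> \<not> locally_finite_grp (tbl_grp A)}"
    (is "comeager_in _ ?Good")
proof -
  have "meager_in G_space (topspace G_space - ?Good)"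
    unfolding meager_in_def
  proof (intro exI conjI)
    show "countable obstruction_sets" by (rule countable_obstruction_sets)
    show "\<forall>T\<in>obstruction_sets. nowhere_dense_in G_space T" using nowhere_dense_obstruction_sets by blast
    show "topspace G_space - ?Good \<subseteq> \<Union>obstruction_sets"
      using obstruction_sets_cover by (auto simp: topspace_G_space)
  qed
  then show ?thesis unfolding comeager_in_def topspace_G_space by blast
qed

end
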